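(* (Haag duality.) The commutant of $\widetilde{\mathcal A}_r$ within the full gauge-invariant algebra $\widetilde{\mathcal A}=\Pi_{GI}\mathcal B(\mathcal H)\Pi_{GI}$ is $\widetilde{\mathcal A}_{\bar r}$: $$\{X\in\widetilde{\mathcal A}:XY=YX\ \ \forall Y\in\widetilde{\mathcal A}_r\}=\widetilde{\mathcal A}_{\bar r}.$$
   Context: Setup. Let $G$ be a compact Lie group (possibly finite) with normalized Haar measure $dg$ ($\int dg=1$). Let $\Lambda=(V,E)$ be a finite directed graph; loops and multiple edges are allowed. Each edge $e$ carries $\mathcal H_e=L^2(G)$ with unitaries $L_e(g)|h\rangle=|gh\rangle$ and $R_e(g^{-1})|h\rangle=|hg^{-1}\rangle$. Each vertex $v$ carries a Hilbert space $\mathcal H_v$ with a unitary representation $U_v$ of $G$. All these spaces are taken finite-dimensional by truncating to finitely many irreducible isotypic sectors, invariant under the group actions. The pre-gauged space is $\mathcal H=\bigotimes_v\mathcal H_v\otimes\bigotimes_e\mathcal H_e$. The gauge transformation at $v$ is $A_v(g)=U_v(g)\prod_{e\in E^-(v)}L_e(g)\prod_{e\in E^+(v)}R_e(g^{-1})$, where $E^-(v)$ is the set of edges oriented out of $v$ and $E^+(v)$ the set of edges oriented into $v$. Set $\Pi_v=\int dg\,A_v(g)$ and $\Pi_{GI}=\prod_v\Pi_v$. A subregion $r$ is an arbitrary subset of $V\cup E$, and $\bar r$ is its complement. Let $\mathcal H_r=\bigotimes_{x\in r}\mathcal H_x$, $\mathcal A_r=\mathcal B(\mathcal H_r)\otimes1_{\bar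 r}$ and $\mathcal A_{\bar r}=1_r\otimes\mathcal B(\mathcal H_{\bar r})$. Define $\widetilde{\mathcal A}_r=\Pi_{GI}\mathcal A_r\Pi_{GI}$ and $\widetilde{\mathcal A}_{\bar r}=\Pi_{GI}\mathcal A_{\bar r}\Pi_{GI}$. All of these are viewed as algebras of operators on $\widetilde{\mathcal H}=\Pi_{GI}\mathcal H$. *)

theory Defs
  imports "HOL-Analysis.Analysis" "HOL-Probability.Probability"
begin

text \<open>The compact group G is a type 'g of class topological_group_add,
written additively (g + h is the group product, - g the inverse, 0 the unit; group_add is
NOT assumed commutative). Hilbert spaces are finite dimensional and realised in
coordinates: a site x carries the space with orthonormal basis indexed by {..< D x};
the tensor product over the sites S has basis the configurations (confs S D).
Operators on it are complex matrices indexed by configurations, represented as functions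
that vanish outside confs x confs.\<close>

type_synonym 'x cfg = "'x \<Rightarrow> nat"
type_synonym 'x op = "'x cfg \<Rightarrow> 'x cfg \<Rightarrow> complex"

definition confs :: "'x set \<Rightarrow> ('x \<Rightarrow> nat) \<Rightarrow> 'x cfg set" where
  "confs S D = PiE S (\<lambda>x. {..< D x})"

definition opmul :: "'x set \<Rightarrow> ('x \<Rightarrow> nat) \<Rightarrow> 'x op \<Rightarrow> 'x op \<Rightarrow> 'x op" where
  "opmul S D A B = (\<lambda>c c''. if c \<in> confs S D \<and> c'' \<in> confs S D
      then (\<Sum>c'\<in>confs S D. A c c' * B c' c'') else 0)"

definition tensor :: "'x set \<Rightarrow> ('x \<Rightarrow> nat) \<Rightarrow> ('x \<Rightarrow> nat \<Rightarrow> nat \<Rightarrow> complex) \<Rightarrow> 'x op" where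
  "tensor S D Op = (\<lambda>c c'. if c \<in> confs S D \<and> c' \<in> confs S D
      then (\<Prod>x\<in>S. Op x (c x) (c' x)) else 0)"

definition kdelta :: "nat \<Rightarrow> nat \<Rightarrow> complex" where
  "kdelta i j = (if i = j then 1 else 0)"

definition opid :: "'x set \<Rightarrow> ('x \<Rightarrow> nat) \<Rightarrow> 'x op" where
  "opid S D = tensor S D (\<lambda>_. kdelta)"

definition full_alg :: "'x set \<Rightarrow> ('x \<Rightarrow> nat) \<Rightarrow> 'x op set" where
  "full_alg S D = {X. \<forall>c c'. \<not> (c \<in> confs S D \<and> c' \<in> confs S D) \<longrightarrow> X c c' = 0}"

text \<open>The local algebra A_r = B(H_r) \<otimes> 1_{rbar}, for r \<subseteq> S.\<close>
definition local_alg :: "'x set \<Rightarrow> ('x \<Rightarrow> nat) \<Rightarrow> 'x set \<Rightarrow> 'x op set" where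
  "local_alg S D r = {(\<lambda>c c'. if c \<in> confs S D \<and> c' \<in> confs S D
       then B (restrict c r) (restrict c' r) *
            (if restrict c (S - r) = restrict c' (S - r) then 1 else 0)
       else 0) | B :: 'x op. True}"

text \<open>Matrix of the unitary L(g) (f \<mapsto> f(g^{-1} \<cdot>)) and of R(g^{-1}) (f \<mapsto> f(\<cdot> g))
  in the orthonormal family f 0, ..., f (n-1) of L^2(G, mu).\<close>
definition Lmat :: "'g::group_add measure \<Rightarrow> (nat \<Rightarrow> 'g \<Rightarrow> complex) \<Rightarrow> 'g \<Rightarrow> nat \<Rightarrow> nat \<Rightarrow> complex" where
  "Lmat \<mu> f g i j = (LINT h|\<mu>. cnj (f i h) * f j (- g + h))"

definition Rinvmat :: "'g::group_add measure \<Rightarrow> (nat \<Rightarrow> 'g \<Rightarrow> complex) \<Rightarrow> 'g \<Rightarrow> nat \<Rightarrow> nat \<Rightarrow> complex" where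
  "Rinvmat \<mu> f g i j = (LINT h|\<mu>. cnj (f i h) * f j (h + g))"

definition sites :: "'v set \<Rightarrow> 'e set \<Rightarrow> ('v + 'e) set" where
  "sites V E = Inl ` V \<union> Inr ` E"

definition site_dim :: "('v \<Rightarrow> nat) \<Rightarrow> ('e \<Rightarrow> nat) \<Rightarrow> ('v + 'e) \<Rightarrow> nat" where
  "site_dim d n x = (case x of Inl v \<Rightarrow> d v | Inr e \<Rightarrow> n e)"

text \<open>Gauge transformation A_v(g) = U_v(g) \<Prod>_{src e = v} L_e(g) \<Prod>_{tgt e = v} R_e(g^{-1}).
  For a loop e at v both factors act on edge e.\<close>
definition gauge_op ::
  "'v set \<Rightarrow> 'e set \<Rightarrow> ('e \<Rightarrow> 'v) \<Rightarrow> ('e \<Rightarrow> 'v) \<Rightarrow> ('v \<Rightarrow> nat) \<Rightarrow> ('e \<Rightarrow> nat)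
   \<Rightarrow> 'g::group_add measure \<Rightarrow> ('v \<Rightarrow> 'g \<Rightarrow> nat \<Rightarrow> nat \<Rightarrow> complex)
   \<Rightarrow> ('e \<Rightarrow> nat \<Rightarrow> 'g \<Rightarrow> complex) \<Rightarrow> 'v \<Rightarrow> 'g \<Rightarrow> ('v + 'e) op" where
  "gauge_op V E src tgt d n \<mu> U \<phi> v g =
     tensor (sites V E) (site_dim d n)
       (\<lambda>x i j. case x of
           Inl w \<Rightarrow> (if w = v then U v g i j else kdelta i j)
         | Inr e \<Rightarrow> (\<Sum>k<n e. (if src e = v then Lmat \<mu> (\<phi> e) g i k else kdelta i k) *
                             (if tgt e = v then Rinvmat \<mu> (\<phi> e) g k j else kdelta k j)))"

definition gauge_proj ::
  "'v set \<Rightarrow> 'e set \<Rightarrow> ('e \<Rightarrow> 'v) \<Rightarrow> ('e \<Rightarrow> 'v) \<Rightarrow> ('v \<Rightarrow> nat) \<Rightarrow> ('e \<Rightarrow> nat)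
   \<Rightarrow> 'g::group_add measure \<Rightarrow> ('v \<Rightarrow> 'g \<Rightarrow> nat \<Rightarrow> nat \<Rightarrow> complex)
   \<Rightarrow> ('e \<Rightarrow> nat \<Rightarrow> 'g \<Rightarrow> complex) \<Rightarrow> 'v \<Rightarrow> ('v + 'e) op" where
  "gauge_proj V E src tgt d n \<mu> U \<phi> v =
     (\<lambda>c c'. LINT g|\<mu>. gauge_op V E src tgt d n \<mu> U \<phi> v g c c')"

text \<open>Pi_GI = \<Prod>_v Pi_v, the vertices being listed (without repetition) by Vs.\<close>
definition PiGI ::
  "'v list \<Rightarrow> 'e set \<Rightarrow> ('e \<Rightarrow> 'v) \<Rightarrow> ('e \<Rightarrow> 'v) \<Rightarrow> ('v \<Rightarrow> nat) \<Rightarrow> ('e \<Rightarrow> nat)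
   \<Rightarrow> 'g::group_add measure \<Rightarrow> ('v \<Rightarrow> 'g \<Rightarrow> nat \<Rightarrow> nat \<Rightarrow> complex)
   \<Rightarrow> ('e \<Rightarrow> nat \<Rightarrow> 'g \<Rightarrow> complex) \<Rightarrow> ('v + 'e) op" where
  "PiGI Vs E src tgt d n \<mu> U \<phi> =
     foldr (opmul (sites (set Vs) E) (site_dim d n))
       (map (gauge_proj (set Vs) E src tgt d n \<mu> U \<phi>) Vs)
       (opid (sites (set Vs) E) (site_dim d n))"

definition compress :: "'x set \<Rightarrow> ('x \<Rightarrow> nat) \<Rightarrow> 'x op \<Rightarrow> 'x op set \<Rightarrow> 'x op set" where
  "compress S D P A = (\<lambda>X. opmul S D (opmul S D P X) P) ` A"

definition haar_measure :: "'g::{topological_group_add} measure \<Rightarrow> bool" where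
  "haar_measure \<mu> \<longleftrightarrow> sets \<mu> = sets borel \<and> prob_space \<mu> \<and>
     (\<forall>g. distr \<mu> \<mu> (\<lambda>h. g + h) = \<mu>) \<and> (\<forall>g. distr \<mu> \<mu> (\<lambda>h. h + g) = \<mu>)"

definition unitary_rep :: "nat \<Rightarrow> ('g::topological_group_add \<Rightarrow> nat \<Rightarrow> nat \<Rightarrow> complex) \<Rightarrow> bool" where
  "unitary_rep m U \<longleftrightarrow>
     (\<forall>g h i j. i < m \<and> j < m \<longrightarrow> U (g + h) i j = (\<Sum>k<m. U g i k * U h k j)) \<and>
     (\<forall>g i j. i < m \<and> j < m \<longrightarrow> (\<Sum>k<m. cnj (U g k i) * U g k j) = kdelta i j) \<and>
     (\<forall>i j. i < m \<and> j < m \<longrightarrow> continuous_on UNIV (\<lambda>g. U g i j))"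

text \<open>f 0, ..., f (m-1) is an orthonormal basis of a finite-dimensional subspace of
  L^2(G, mu) invariant under left and right translations (i.e. a truncation of L^2(G)
  to finitely many isotypic sectors).\<close>
definition L2_trunc_basis :: "'g::topological_group_add measure \<Rightarrow> nat \<Rightarrow> (nat \<Rightarrow> 'g \<Rightarrow> complex) \<Rightarrow> bool" where
  "L2_trunc_basis \<mu> m f \<longleftrightarrow>
     (\<forall>i<m. f i \<in> borel_measurable \<mu> \<and> integrable \<mu> (\<lambda>h. (cmod (f i h))\<^sup>2)) \<and>
     (\<forall>i<m. \<forall>j<m. (LINT h|\<mu>. cnj (f i h) * f j h) = kdelta i j) \<and>
     (\<forall>g. \<forall>j<m. \<exists>a. AE h in \<mu>. f j (- g + h) = (\<Sum>i<m. a i * f i h)) \<and>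
     (\<forall>g. \<forall>j<m. \<exists>a. AE h in \<mu>. f j (h + g) = (\<Sum>i<m. a i * f i h))"

end

theory Submission
  imports Defs "HOL-Library.Function_Algebras"
begin

text \<open>Split the configurations as \<open>H = H\<^sub>r \<otimes> H\<^sub>r\<^sub>'\<close> (\<open>r' = S - r\<close>) and let \<open>P = \<Pi>\<^sub>G\<^sub>I\<close>.
  Every vertex projection is the Haar average of a unitary representation that factorises
  over \<open>r\<close> and \<open>r'\<close>, so \<open>P\<close> is a Hermitian idempotent and twirling \<open>B \<otimes> 1\<close> over all vertices
  gives some \<open>B' \<otimes> 1\<close> that commutes with \<open>P\<close> and has the same compression; hence
  \<open>P (1 \<otimes> N) P\<close> commutes with \<open>P (B \<otimes> 1) P\<close>.

  Conversely let \<open>X = P X P\<close> commute with \<open>P A\<^sub>r P\<close>. Sandwiching \<open>X\<close> between the matrix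
  units \<open>E\<^sub>a\<^sub>b \<otimes> 1\<close> and summing gives \<open>P (1 \<otimes> tr\<^sub>r X) P = X P L P\<close> with \<open>L = 1 \<otimes> tr\<^sub>r P\<close>.
  The operator \<open>L\<close> commutes with \<open>P\<close> (partial traces of gauge-invariant operators are
  gauge invariant) and \<open>P L P\<close> is positive definite on the range of \<open>P\<close>, so
  \<open>Q = P L P + 1 - P\<close> is invertible. Its inverse is a polynomial in \<open>Q\<close>, and on the range of \<open>P\<close>
  it is the same polynomial in \<open>L\<close>, i.e. some \<open>1 \<otimes> N\<close>. Therefore
  \<open>X = X Q Q\<^sup>-\<^sup>1 P = P (1 \<otimes> tr\<^sub>r X \<cdot> N) P\<close> lies in \<open>P A\<^sub>r\<^sub>' P\<close>.\<close>

section \<open>Matrices over a finite index set\<close>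

type_synonym 'c mat = "'c \<Rightarrow> 'c \<Rightarrow> complex"

definition mat_mul :: "'c set \<Rightarrow> 'c mat \<Rightarrow> 'c mat \<Rightarrow> 'c mat" where
 "mat_mul C A B = (\<lambda>c c''. if c \<in> C \<and> c'' \<in> C then (\<Sum>c'\<in>C. A c c' * B c' c'') else 0)"

definition mat_on :: "'c set \<Rightarrow> 'c mat \<Rightarrow> bool" where
 "mat_on C X \<longleftrightarrow> (\<forall>c c'. \<not>(c \<in> C \<and> c' \<in> C) \<longrightarrow> X c c' = 0)"

definition mat_id :: "'c set \<Rightarrow> 'c mat" where
 "mat_id C = (\<lambda>c c'. if c \<in> C \<and> c' \<in> C \<and> c = c' then 1 else 0)"

definition mat_adj :: "'c mat \<Rightarrow> 'c mat" where "mat_adj X = (\<lambda>c c'. cnj (X c' c))"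

definition mat_scale :: "complex \<Rightarrow> 'c mat \<Rightarrow> 'c mat" where "mat_scale a X = (\<lambda>c c'. a * X c c')"

lemma opmul_eq_mat_mul: "opmul S D = mat_mul (confs S D)"
  by (simp add: opmul_def mat_mul_def fun_eq_iff)

lemma sum_apply: "(\<Sum>i\<in>I. A i) x = (\<Sum>i\<in>I. A i x)"
  by (induction I rule: infinite_finite_induct) auto

lemma sum_delta_mult_collapse:
  fixes G :: "'a \<Rightarrow> 'b \<Rightarrow> 'c::comm_semiring_1"
  assumes "finite A" "a \<in> A"
  shows "(\<Sum>a'\<in>A. \<Sum>b\<in>B. (if a' = a then 1 else 0) * G a' b) = (\<Sum>b\<in>B. G a b)"
  using assms by (subst sum.swap) (simp add: if_distrib[where f="\<lambda>x. x * _"] cong: if_cong)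

lemma mat_mul_apply: "c \<in> C \<Longrightarrow> c'' \<in> C \<Longrightarrow> mat_mul C A B c c'' = (\<Sum>c'\<in>C. A c c' * B c' c'')"
  by (simp add: mat_mul_def)

lemma mat_onD: "mat_on C X \<Longrightarrow> \<not>(c \<in> C \<and> c' \<in> C) \<Longrightarrow> X c c' = 0"
  by (simp add: mat_on_def)

lemma mat_on_mul[simp]: "mat_on C (mat_mul C A B)"
  by (simp add: mat_on_def mat_mul_def)

lemma mat_on_id[simp]: "mat_on C (mat_id C)"
  by (simp add: mat_on_def mat_id_def)

lemma mat_on_add: "mat_on C X \<Longrightarrow> mat_on C Y \<Longrightarrow> mat_on C (X + Y)"
  by (auto simp: mat_on_def)

lemma mat_on_scale: "mat_on C X \<Longrightarrow> mat_on C (mat_scale a X)"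
  by (auto simp: mat_on_def mat_scale_def)

lemma mat_on_zero[simp]: "mat_on C 0"
  by (auto simp: mat_on_def)

lemma mat_on_sum: "(\<And>i. i \<in> I \<Longrightarrow> mat_on C (A i)) \<Longrightarrow> mat_on C (\<Sum>i\<in>I. A i)"
  by (induction I rule: infinite_finite_induct) (auto intro: mat_on_add)

lemma mat_mul_assoc: "finite C \<Longrightarrow> mat_mul C (mat_mul C A B) X = mat_mul C A (mat_mul C B X)"
  by (auto simp: mat_mul_def fun_eq_iff sum_distrib_left sum_distrib_right mult.assoc intro: sum.swap)

lemma mat_mul_id_left_apply: "finite A \<Longrightarrow> a \<in> A \<Longrightarrow> a' \<in> A \<Longrightarrow> mat_mul A (mat_id A) M a a' = M a a'"
proof -
  assume f: "finite A" and a: "a \<in> A" "a' \<in> A"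
  have "mat_mul A (mat_id A) M a a' = (\<Sum>d\<in>A. if a = d then M d a' else 0)"
    using a by (simp add: mat_mul_def) (intro sum.cong, auto simp: mat_id_def)
  also have "\<dots> = M a a'" using f a by simp
  finally show ?thesis .
qed

lemma mat_mul_id_right_apply: "finite A \<Longrightarrow> a \<in> A \<Longrightarrow> a' \<in> A \<Longrightarrow> mat_mul A M (mat_id A) a a' = M a a'"
proof -
  assume f: "finite A" and a: "a \<in> A" "a' \<in> A"
  have "mat_mul A M (mat_id A) a a' = (\<Sum>d\<in>A. if d = a' then M a d else 0)"
    using a by (simp add: mat_mul_def) (intro sum.cong, auto simp: mat_id_def)
  also have "\<dots> = M a a'" using f a by simp
  finally show ?thesis .
qed

lemma mat_mul_id_left: "mat_on C X \<Longrightarrow> finite C \<Longrightarrow> mat_mul C (mat_id C) X = X"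
  by (intro ext) (metis mat_mul_id_left_apply mat_onD mat_on_mul)

lemma mat_mul_id_right: "mat_on C X \<Longrightarrow> finite C \<Longrightarrow> mat_mul C X (mat_id C) = X"
  by (intro ext) (metis mat_mul_id_right_apply mat_onD mat_on_mul)

lemma mat_adj_mul: "mat_adj (mat_mul C A B) = mat_mul C (mat_adj B) (mat_adj A)"
  by (auto simp: mat_adj_def mat_mul_def fun_eq_iff mult.commute)

lemma mat_adj_id[simp]: "mat_adj (mat_id C) = mat_id C"
  by (auto simp: mat_adj_def mat_id_def fun_eq_iff)

lemma mat_mul_add_left: "mat_mul C (A + B) X = mat_mul C A X + mat_mul C B X"
  by (auto simp: mat_mul_def fun_eq_iff distrib_right sum.distrib)

lemma mat_mul_add_right: "mat_mul C X (A + B) = mat_mul C X A + mat_mul C X B"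
  by (auto simp: mat_mul_def fun_eq_iff distrib_left sum.distrib)

lemma mat_mul_diff_left: "mat_mul C (A - B) X = mat_mul C A X - mat_mul C B X"
  by (auto simp: mat_mul_def fun_eq_iff left_diff_distrib sum_subtractf)

lemma mat_mul_diff_right: "mat_mul C X (A - B) = mat_mul C X A - mat_mul C X B"
  by (auto simp: mat_mul_def fun_eq_iff right_diff_distrib sum_subtractf)

lemma mat_mul_sum_left: "mat_mul C (\<Sum>i\<in>I. A i) X = (\<Sum>i\<in>I. mat_mul C (A i) X)"
proof -
  { fix c e
    have "mat_mul C (\<Sum>i\<in>I. A i) X c e = (\<Sum>i\<in>I. mat_mul C (A i) X c e)"
      by (cases "c \<in> C \<and> e \<in> C") (auto simp: mat_mul_def sum_apply sum_distrib_right intro: sum.swap) }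
  then show ?thesis by (simp add: fun_eq_iff sum_apply)
qed

lemma mat_mul_sum_right: "mat_mul C X (\<Sum>i\<in>I. A i) = (\<Sum>i\<in>I. mat_mul C X (A i))"
proof -
  { fix c e
    have "mat_mul C X (\<Sum>i\<in>I. A i) c e = (\<Sum>i\<in>I. mat_mul C X (A i) c e)"
      by (cases "c \<in> C \<and> e \<in> C") (auto simp: mat_mul_def sum_apply sum_distrib_left intro: sum.swap) }
  then show ?thesis by (simp add: fun_eq_iff sum_apply)
qed

lemma mat_mul_scale_left: "mat_mul C (mat_scale a A) X = mat_scale a (mat_mul C A X)"
  by (auto simp: mat_mul_def mat_scale_def fun_eq_iff sum_distrib_left mult.assoc)

lemma mat_mul_scale_right: "mat_mul C X (mat_scale a A) = mat_scale a (mat_mul C X A)"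
  by (auto simp: mat_mul_def mat_scale_def fun_eq_iff sum_distrib_left mult.assoc mult.left_commute)

lemma mat_scale_sum: "mat_scale a (\<Sum>i\<in>I. A i) = (\<Sum>i\<in>I. mat_scale a (A i))"
  by (simp add: mat_scale_def fun_eq_iff sum_apply sum_distrib_left)

lemma mat_scale_scale: "mat_scale a (mat_scale b X) = mat_scale (a*b) X"
  by (auto simp: mat_scale_def mult.assoc)

definition mat_vec :: "'c set \<Rightarrow> 'c mat \<Rightarrow> ('c \<Rightarrow> complex) \<Rightarrow> ('c \<Rightarrow> complex)" where
  "mat_vec C A z = (\<lambda>c. \<Sum>d\<in>C. A c d * z d)"

definition vinner :: "'c set \<Rightarrow> ('c \<Rightarrow> complex) \<Rightarrow> ('c \<Rightarrow> complex) \<Rightarrow> complex" where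
  "vinner C y z = (\<Sum>c\<in>C. cnj (y c) * z c)"

lemma mat_vec_mul: "c \<in> C \<Longrightarrow> mat_vec C (mat_mul C A B) z c = mat_vec C A (mat_vec C B z) c"
proof -
  assume c: "c \<in> C"
  have "mat_vec C (mat_mul C A B) z c = (\<Sum>d\<in>C. \<Sum>e\<in>C. A c e * B e d * z d)"
    unfolding mat_vec_def by (intro sum.cong refl) (simp add: mat_mul_def c sum_distrib_right)
  also have "\<dots> = (\<Sum>e\<in>C. \<Sum>d\<in>C. A c e * B e d * z d)" by (rule sum.swap)
  also have "\<dots> = mat_vec C A (mat_vec C B z) c"
    unfolding mat_vec_def by (simp add: sum_distrib_left mult.assoc)
  finally show ?thesis .
qed

lemma mat_vec_cong: "(\<And>d. d \<in> C \<Longrightarrow> z d = z' d) \<Longrightarrow> mat_vec C A z c = mat_vec C A z' c"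
  by (simp add: mat_vec_def)

lemma vinner_cong: "(\<And>d. d \<in> C \<Longrightarrow> z d = z' d) \<Longrightarrow> (\<And>d. d \<in> C \<Longrightarrow> y d = y' d) \<Longrightarrow> vinner C y z = vinner C y' z'"
  by (simp add: vinner_def)

lemma vinner_adj: "vinner C y (mat_vec C A z) = vinner C (mat_vec C (mat_adj A) y) z"
proof -
  have "vinner C y (mat_vec C A z) = (\<Sum>c\<in>C. \<Sum>d\<in>C. cnj (y c) * A c d * z d)"
    by (simp add: vinner_def mat_vec_def sum_distrib_left mult.assoc)
  also have "\<dots> = (\<Sum>d\<in>C. \<Sum>c\<in>C. cnj (y c) * A c d * z d)" by (rule sum.swap)
  also have "\<dots> = vinner C (mat_vec C (mat_adj A) y) z"
    by (simp add: vinner_def mat_vec_def mat_adj_def sum_distrib_right sum_distrib_left mult_ac)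
  finally show ?thesis .
qed

lemma vinner_self: "vinner C y y = of_real (\<Sum>c\<in>C. (cmod (y c))\<^sup>2)"
  unfolding vinner_def of_real_sum by (intro sum.cong refl) (simp add: complex_norm_square[symmetric] mult.commute)

lemma mat_vec_add: "mat_vec C (A + B) z c = mat_vec C A z c + mat_vec C B z c"
  by (simp add: mat_vec_def distrib_right sum.distrib)

lemma mat_vec_diff: "mat_vec C (A - B) z c = mat_vec C A z c - mat_vec C B z c"
  by (simp add: mat_vec_def left_diff_distrib sum_subtractf)

lemma mat_vec_sum: "mat_vec C (\<Sum>i\<in>I. A i) z c = (\<Sum>i\<in>I. mat_vec C (A i) z c)"
  unfolding mat_vec_def sum_apply sum_distrib_right by (rule sum.swap)

lemma mat_vec_id: "finite C \<Longrightarrow> c \<in> C \<Longrightarrow> mat_vec C (mat_id C) z c = z c"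
proof -
  assume f: "finite C" and c: "c \<in> C"
  have "mat_vec C (mat_id C) z c = (\<Sum>d\<in>C. if c = d then z d else 0)"
    unfolding mat_vec_def using c by (intro sum.cong) (auto simp: mat_id_def)
  also have "\<dots> = z c" using f c by simp
  finally show ?thesis .
qed

lemma vinner_zero_right: "(\<And>c. c \<in> C \<Longrightarrow> z c = 0) \<Longrightarrow> vinner C y z = 0"
  by (simp add: vinner_def)

lemma vinner_sum_right: "vinner C y (\<lambda>c. \<Sum>i\<in>I. f i c) = (\<Sum>i\<in>I. vinner C y (f i))"
  unfolding vinner_def sum_distrib_left by (rule sum.swap)

lemma mat_vec_sum_vec: "mat_vec C A (\<lambda>d. \<Sum>i\<in>I. f i d) c = (\<Sum>i\<in>I. mat_vec C A (f i) c)"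
  unfolding mat_vec_def sum_distrib_left by (rule sum.swap)

lemma vinner_sandwich:
  assumes fC: "finite C" and Ph: "mat_adj P = P" and P_idem: "mat_mul C P P = P"
  shows "vinner C z (mat_vec C (mat_mul C P (mat_mul C A (mat_mul C P (mat_mul C (mat_adj A) P)))) z)
       = vinner C (mat_vec C P (mat_vec C (mat_adj A) (mat_vec C P z))) (mat_vec C P (mat_vec C (mat_adj A) (mat_vec C P z)))"
proof -
  define x where "x = mat_vec C (mat_adj A) (mat_vec C P z)"
  define y where "y = mat_vec C (mat_mul C P (mat_mul C (mat_adj A) P)) z"
  have y_eq: "y c = mat_vec C P x c" if "c \<in> C" for c
  proof -
    have "y c = mat_vec C P (mat_vec C (mat_mul C (mat_adj A) P) z) c" unfolding y_def using that by (rule mat_vec_mul)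
    also have "\<dots> = mat_vec C P x c" unfolding x_def by (rule mat_vec_cong) (simp add: mat_vec_mul)
    finally show ?thesis .
  qed
  have "vinner C z (mat_vec C (mat_mul C P (mat_mul C A (mat_mul C P (mat_mul C (mat_adj A) P)))) z) = vinner C z (mat_vec C P (mat_vec C A y))"
    unfolding y_def by (rule vinner_cong) (simp_all add: mat_vec_mul, rule mat_vec_cong, simp add: mat_vec_mul)
  also have "\<dots> = vinner C (mat_vec C P z) (mat_vec C A y)" by (simp add: vinner_adj Ph)
  also have "\<dots> = vinner C x y" unfolding x_def by (simp add: vinner_adj)
  also have "\<dots> = vinner C x (mat_vec C P x)" by (rule vinner_cong) (simp_all add: y_eq)
  also have "\<dots> = vinner C x (mat_vec C P (mat_vec C P x))"
    by (rule vinner_cong) (simp_all add: mat_vec_mul[symmetric] P_idem)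
  also have "\<dots> = vinner C (mat_vec C P x) (mat_vec C P x)" by (simp add: vinner_adj Ph)
  finally show ?thesis unfolding x_def .
qed

lemma sum_vinner_self_eq_0:
  assumes "finite A" "finite C" "(\<Sum>a\<in>A. vinner C (v a) (v a)) = 0" "a \<in> A" "c \<in> C"
  shows "v a c = 0"
proof -
  have "complex_of_real (\<Sum>a\<in>A. \<Sum>c\<in>C. (cmod (v a c))\<^sup>2) = 0"
    using assms(3) by (simp only: vinner_self of_real_sum)
  then have "(\<Sum>a\<in>A. \<Sum>c\<in>C. (cmod (v a c))\<^sup>2) = 0"
    by (simp only: of_real_eq_0_iff)
  then have "(\<Sum>c\<in>C. (cmod (v a c))\<^sup>2) = 0"
    using assms(1,4) by (simp add: sum_nonneg sum_nonneg_eq_0_iff)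
  then show ?thesis
    using assms(2,5) by (simp add: sum_nonneg_eq_0_iff)
qed

section \<open>Polynomial inverses\<close>

fun mat_pow :: "'c set \<Rightarrow> 'c mat \<Rightarrow> nat \<Rightarrow> 'c mat" where
  "mat_pow C Q 0 = mat_id C"
| "mat_pow C Q (Suc k) = mat_mul C Q (mat_pow C Q k)"

lemma mat_on_pow[simp]: "mat_on C (mat_pow C Q k)"
  by (cases k) auto

lemma mat_pow_add: "finite C \<Longrightarrow> mat_pow C Q (i + j) = mat_mul C (mat_pow C Q i) (mat_pow C Q j)"
  by (induction i) (auto simp: mat_mul_id_left mat_mul_assoc)

lemma mat_pow_commute: "finite C \<Longrightarrow> mat_on C B \<Longrightarrow> mat_mul C A B = mat_mul C B A \<Longrightarrow> mat_mul C (mat_pow C A j) B = mat_mul C B (mat_pow C A j)"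
proof (induction j)
  case 0 then show ?case by (simp add: mat_mul_id_left mat_mul_id_right)
next
  case (Suc j) then show ?case by (simp add: mat_mul_assoc) (metis mat_mul_assoc)
qed

definition mat_unit :: "'c \<Rightarrow> 'c \<Rightarrow> 'c mat" where
  "mat_unit c d = (\<lambda>i j. if i = c \<and> j = d then 1 else 0)"

interpretation mat_vs: vector_space "mat_scale :: complex \<Rightarrow> 'c mat \<Rightarrow> 'c mat"
  by unfold_locales (auto simp: mat_scale_def fun_eq_iff algebra_simps)

lemma mat_on_unit_expansion:
  assumes "finite C" "mat_on C X"
  shows "X = (\<Sum>(c, d)\<in>C \<times> C. mat_scale (X c d) (mat_unit c d))"
proof (intro ext)
  fix i j
  have "(\<Sum>(c, d)\<in>C \<times> C. mat_scale (X c d) (mat_unit c d)) i j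
      = (\<Sum>cd\<in>C \<times> C. if (i, j) = cd then X i j else 0)"
    unfolding sum_apply by (intro sum.cong refl) (auto simp: mat_scale_def mat_unit_def split: if_splits)
  also have "\<dots> = X i j"
    using assms mat_onD[of C X i j] by (simp add: sum.delta')
  finally show "X i j = (\<Sum>(c, d)\<in>C \<times> C. mat_scale (X c d) (mat_unit c d)) i j" by simp
qed

lemma mat_on_in_span_units:
  assumes "finite C" "mat_on C X"
  shows "X \<in> mat_vs.span (case_prod mat_unit ` (C \<times> C))"
proof -
  have "mat_scale (X c d) (mat_unit c d) \<in> mat_vs.span (case_prod mat_unit ` (C \<times> C))"
    if "(c, d) \<in> C \<times> C" for c d
    using that by (intro mat_vs.span_scale mat_vs.span_base) (auto intro: rev_image_eqI)
  then show ?thesis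
    by (subst mat_on_unit_expansion[OF assms]) (rule mat_vs.span_sum, auto)
qed

lemma (in vector_space) span_family_linear_relation:
  assumes T: "finite T" and f: "\<And>k. k \<le> card T \<Longrightarrow> f k \<in> span T"
  shows "\<exists>a. (\<Sum>k\<le>card T. scale (a k) (f k)) = 0 \<and> (\<exists>k\<le>card T. a k \<noteq> 0)"
proof (cases "inj_on f {..card T}")
  case False
  then obtain i j where ij: "i \<le> card T" "j \<le> card T" "i \<noteq> j" "f i = f j"
    by (auto simp: inj_on_def)
  define a :: "nat \<Rightarrow> 'a" where "a k = (if k = i then 1 else if k = j then -1 else 0)" for k
  have "(\<Sum>k\<le>card T. scale (a k) (f k)) = (\<Sum>k\<le>card T. (if k = i then f i else 0) - (if k = j then f j else 0))"
    by (intro sum.cong) (auto simp: a_def ij(3))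
  also have "\<dots> = 0"
    using ij by (simp add: sum_subtractf)
  finally have "(\<Sum>k\<le>card T. scale (a k) (f k)) = 0" .
  moreover have "a i \<noteq> 0"
    by (simp add: a_def)
  ultimately show ?thesis
    using ij(1) by blast
next
  case True
  define S where "S = f ` {..card T}"
  have "card S = Suc (card T)"
    using True by (simp add: S_def card_image)
  moreover have "S \<subseteq> span T"
    using f by (auto simp: S_def)
  ultimately have "dependent S"
    using independent_span_bound[OF T] by fastforce
  then obtain U u where U: "finite U" "U \<subseteq> S" "(\<Sum>v\<in>U. scale (u v) v) = 0" "\<exists>v\<in>U. u v \<noteq> 0"
    unfolding dependent_explicit by blast
  define A where "A = {k \<in> {..card T}. f k \<in> U}"
  define a where "a k = (if f k \<in> U then u (f k) else 0)" for k
  have "(\<Sum>k\<le>card T. scale (a k) (f k)) = (\<Sum>k\<in>A. scale (u (f k)) (f k))"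
    by (rule sum.mono_neutral_cong_right) (auto simp: A_def a_def)
  also have "\<dots> = (\<Sum>v\<in>U. scale (u v) v)"
    by (rule sym, rule sum.reindex_cong[of f A U]) (use True U(2) in \<open>auto simp: A_def S_def inj_on_def\<close>)
  finally have "(\<Sum>k\<le>card T. scale (a k) (f k)) = 0"
    using U(3) by simp
  moreover obtain k where "k \<le> card T" "a k \<noteq> 0"
    using U(2,4) by (auto simp: S_def a_def)
  ultimately show ?thesis
    by blast
qed

lemma mat_pow_linear_relation:
  assumes "finite C"
  shows "\<exists>K a. (\<Sum>k\<le>K. mat_scale (a k) (mat_pow C Q k)) = 0 \<and> (\<exists>k\<le>K. a k \<noteq> 0)"
proof -
  have "finite (case_prod mat_unit ` (C \<times> C))"
    using assms by simp
  from mat_vs.span_family_linear_relation[of _ "mat_pow C Q", OF this mat_on_in_span_units[OF assms mat_on_pow]]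
  show ?thesis by blast
qed

definition mat_injective :: "'c set \<Rightarrow> 'c mat \<Rightarrow> bool" where
  "mat_injective C Q \<longleftrightarrow> (\<forall>z. (\<forall>c\<in>C. mat_vec C Q z c = 0) \<longrightarrow> (\<forall>c\<in>C. z c = 0))"

lemma mat_injective_mul_eq_0:
  assumes inj: "mat_injective C Q" and Z: "mat_on C Z" and QZ: "mat_mul C Q Z = 0"
  shows "Z = 0"
proof (intro ext)
  fix c' e'
  have "Z c' e' = 0"
  proof (cases "c' \<in> C \<and> e' \<in> C")
    case True
    have "mat_vec C Q (\<lambda>d. Z d e') c = 0" if "c \<in> C" for c
      using fun_cong[OF fun_cong[OF QZ, of c], of e'] that True by (simp add: mat_vec_def mat_mul_apply)
    then show ?thesis
      using inj True unfolding mat_injective_def by blast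
  qed (use Z in \<open>simp add: mat_onD\<close>)
  then show "Z c' e' = 0 c' e'" by simp
qed

lemma mat_injective_pow_mul_eq_0:
  assumes "finite C" and "mat_injective C Q"
  shows "mat_on C Z \<Longrightarrow> mat_mul C (mat_pow C Q k) Z = 0 \<Longrightarrow> Z = 0"
proof (induction k arbitrary: Z)
  case 0
  then show ?case using assms by (simp add: mat_mul_id_left)
next
  case (Suc k)
  have "mat_mul C Q (mat_mul C (mat_pow C Q k) Z) = 0"
    using Suc.prems(2) assms by (simp only: mat_pow.simps mat_mul_assoc)
  then have "mat_mul C (mat_pow C Q k) Z = 0"
    using mat_injective_mul_eq_0[OF assms(2)] by simp
  then show ?case using Suc by blast
qed

lemma mat_injective_pow_relation:
  assumes fin: "finite C" and inj: "mat_injective C Q"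
  shows "\<exists>J c. (\<Sum>j\<le>J. mat_scale (c j) (mat_pow C Q j)) = 0 \<and> c 0 \<noteq> 0"
proof -
  obtain K a where rel: "(\<Sum>k\<le>K. mat_scale (a k) (mat_pow C Q k)) = 0" and nz: "\<exists>k\<le>K. a k \<noteq> 0"
    using mat_pow_linear_relation[OF fin] by blast
  define k0 where "k0 = (LEAST k. a k \<noteq> 0)"
  have ak0: "a k0 \<noteq> 0"
    using nz unfolding k0_def by (metis (mono_tags) LeastI_ex)
  have k0K: "k0 \<le> K"
    using nz unfolding k0_def by (meson Least_le le_trans)
  have below: "k < k0 \<Longrightarrow> a k = 0" for k
    unfolding k0_def using not_less_Least by blast
  define J where "J = K - k0"
  define c where "c j = a (k0 + j)" for j
  have img: "{k0..K} = (\<lambda>j. k0 + j) ` {..J}"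
  proof (intro equalityI subsetI)
    fix k assume "k \<in> {k0..K}"
    then show "k \<in> (\<lambda>j. k0 + j) ` {..J}"
      by (intro image_eqI[of _ _ "k - k0"]) (auto simp: J_def)
  qed (use k0K in \<open>auto simp: J_def\<close>)
  have "(\<Sum>k\<le>K. mat_scale (a k) (mat_pow C Q k)) = (\<Sum>k\<in>{k0..K}. mat_scale (a k) (mat_pow C Q k))"
    by (rule sum.mono_neutral_right) (auto simp: below mat_scale_def fun_eq_iff)
  also have "\<dots> = (\<Sum>j\<le>J. mat_scale (c j) (mat_pow C Q (k0 + j)))"
    unfolding img by (simp add: sum.reindex c_def)
  also have "\<dots> = mat_mul C (mat_pow C Q k0) (\<Sum>j\<le>J. mat_scale (c j) (mat_pow C Q j))"
    by (simp add: mat_mul_sum_right mat_mul_scale_right mat_pow_add fin)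
  finally have "mat_mul C (mat_pow C Q k0) (\<Sum>j\<le>J. mat_scale (c j) (mat_pow C Q j)) = 0"
    using rel by simp
  then have "(\<Sum>j\<le>J. mat_scale (c j) (mat_pow C Q j)) = 0"
    by (rule mat_injective_pow_mul_eq_0[OF fin inj, rotated]) (simp add: mat_on_sum mat_on_scale)
  moreover have "c 0 \<noteq> 0"
    using ak0 by (simp add: c_def)
  ultimately show ?thesis
    by blast
qed

lemma mat_injective_polynomial_inverse:
  assumes fin: "finite C" and inj: "mat_injective C Q"
  shows "\<exists>J b. mat_mul C Q (\<Sum>j<J. mat_scale (b j) (mat_pow C Q j)) = mat_id C"
proof -
  obtain J c where rel: "(\<Sum>j\<le>J. mat_scale (c j) (mat_pow C Q j)) = 0" and c0: "c 0 \<noteq> 0"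
    using mat_injective_pow_relation[OF fin inj] by blast
  define R where "R = (\<Sum>j<J. mat_scale (c (Suc j)) (mat_pow C Q j))"
  have "(\<Sum>j\<le>J. mat_scale (c j) (mat_pow C Q j)) = mat_scale (c 0) (mat_id C) + mat_mul C Q R"
    unfolding lessThan_Suc_atMost[symmetric] sum.lessThan_Suc_shift R_def
    by (simp add: mat_mul_sum_right mat_mul_scale_right)
  then have QR: "mat_mul C Q R = - mat_scale (c 0) (mat_id C)"
    using rel by (simp add: eq_neg_iff_add_eq_0 add.commute)
  have "mat_mul C Q (\<Sum>j<J. mat_scale (- c (Suc j) / c 0) (mat_pow C Q j)) = mat_scale (- 1 / c 0) (mat_mul C Q R)"
    by (simp add: R_def mat_scale_sum mat_scale_scale flip: mat_mul_scale_right)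
  also have "\<dots> = mat_id C"
    using c0 by (simp add: QR mat_scale_def fun_eq_iff)
  finally show ?thesis by (intro exI)
qed

lemma mat_pow_shifted_compression:
  assumes C: "finite C" and P: "mat_on C P" "mat_mul C P P = P" and LP: "mat_mul C L P = mat_mul C P L"
  shows "mat_mul C (mat_pow C (mat_mul C L P + mat_id C - P) j) P = mat_mul C (mat_pow C L j) P"
proof (induction j)
  case (Suc j)
  define Q where "Q = mat_mul C L P + mat_id C - P"
  have QP: "mat_mul C Q P = mat_mul C L P"
    by (simp add: Q_def mat_mul_add_left mat_mul_diff_left mat_mul_assoc[OF C] P mat_mul_id_left[OF P(1) C])
  have Lj: "mat_mul C (mat_pow C L j) P = mat_mul C P (mat_pow C L j)"
    using mat_pow_commute[OF C P(1) LP] .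
  have IH: "mat_mul C (mat_pow C Q j) P = mat_mul C P (mat_pow C L j)"
    using Suc.IH Lj by (simp only: Q_def)
  have "mat_mul C (mat_pow C Q (Suc j)) P = mat_mul C Q (mat_mul C P (mat_pow C L j))"
    by (simp only: mat_pow.simps mat_mul_assoc[OF C] IH)
  also have "\<dots> = mat_mul C L (mat_mul C P (mat_pow C L j))"
    by (simp add: QP mat_mul_assoc[OF C, symmetric])
  finally show ?case
    by (simp only: Q_def Lj mat_mul_assoc[OF C] mat_pow.simps)
qed simp

section \<open>Product index sets, lifts and partial traces\<close>

locale index_product =
  fixes C :: "'c set" and C1 :: "'a set" and C2 :: "'b set"
    and p1 :: "'c \<Rightarrow> 'a" and p2 :: "'c \<Rightarrow> 'b" and join :: "'a \<Rightarrow> 'b \<Rightarrow> 'c"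
  assumes finite_C1: "finite C1" and finite_C2: "finite C2"
    and p1_in: "c \<in> C \<Longrightarrow> p1 c \<in> C1" and p2_in: "c \<in> C \<Longrightarrow> p2 c \<in> C2"
    and join_in: "a \<in> C1 \<Longrightarrow> b \<in> C2 \<Longrightarrow> join a b \<in> C"
    and p1_join: "a \<in> C1 \<Longrightarrow> b \<in> C2 \<Longrightarrow> p1 (join a b) = a"
    and p2_join: "a \<in> C1 \<Longrightarrow> b \<in> C2 \<Longrightarrow> p2 (join a b) = b"
    and join_proj: "c \<in> C \<Longrightarrow> join (p1 c) (p2 c) = c"
begin

abbreviation mul :: "'c mat \<Rightarrow> 'c mat \<Rightarrow> 'c mat" (infixl "\<odot>" 70)
  where "A \<odot> B \<equiv> mat_mul C A B"

lemma join_bij: "bij_betw (\<lambda>ab. join (fst ab) (snd ab)) (C1 \<times> C2) C"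
  by (rule bij_betw_byWitness[where f'="\<lambda>c. (p1 c, p2 c)"])
     (auto simp: p1_join p2_join join_proj join_in p1_in p2_in image_iff intro!: bexI[of _ "(p1 _, p2 _)"])

lemma finite_C: "finite C"
  using bij_betw_finite[OF join_bij] finite_C1 finite_C2 by simp

lemma sum_join: "(\<Sum>c\<in>C. f c) = (\<Sum>a\<in>C1. \<Sum>b\<in>C2. f (join a b))"
  using sum.reindex_bij_betw[OF join_bij, of f] by (simp add: sum.cartesian_product case_prod_beta)

lemma eq_iff_proj: "c \<in> C \<Longrightarrow> c' \<in> C \<Longrightarrow> c = c' \<longleftrightarrow> p1 c = p1 c' \<and> p2 c = p2 c'"
  by (metis join_proj)

definition kron :: "'a mat \<Rightarrow> 'b mat \<Rightarrow> 'c mat" where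
  "kron W1 W2 = (\<lambda>c c'. if c \<in> C \<and> c' \<in> C then W1 (p1 c) (p1 c') * W2 (p2 c) (p2 c') else 0)"

lemma mat_on_kron[simp]: "mat_on C (kron W1 W2)"
  by (simp add: mat_on_def kron_def)

lemma mat_mul_kron: "kron W1 W2 \<odot> kron W3 W4 = kron (mat_mul C1 W1 W3) (mat_mul C2 W2 W4)"
proof -
  { fix c e assume ce: "c \<in> C" "e \<in> C"
    have "(kron W1 W2 \<odot> kron W3 W4) c e
       = (\<Sum>d\<in>C. W1 (p1 c) (p1 d) * W2 (p2 c) (p2 d) * (W3 (p1 d) (p1 e) * W4 (p2 d) (p2 e)))"
      using ce by (simp add: mat_mul_def kron_def)
    also have "\<dots> = (\<Sum>a\<in>C1. \<Sum>b\<in>C2. W1 (p1 c) a * W2 (p2 c) b * (W3 a (p1 e) * W4 b (p2 e)))"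
      by (simp add: sum_join p1_join p2_join cong: sum.cong)
    also have "\<dots> = (\<Sum>a\<in>C1. W1 (p1 c) a * W3 a (p1 e)) * (\<Sum>b\<in>C2. W2 (p2 c) b * W4 b (p2 e))"
      by (simp add: sum_product mult_ac)
    also have "\<dots> = kron (mat_mul C1 W1 W3) (mat_mul C2 W2 W4) c e"
      using ce by (simp add: kron_def mat_mul_def p1_in p2_in)
    finally have "(kron W1 W2 \<odot> kron W3 W4) c e = kron (mat_mul C1 W1 W3) (mat_mul C2 W2 W4) c e" . }
  then show ?thesis by (auto simp: fun_eq_iff mat_mul_def kron_def)
qed

lemma kron_cong:
  "(\<And>a a'. a \<in> C1 \<Longrightarrow> a' \<in> C1 \<Longrightarrow> W1 a a' = W1' a a') \<Longrightarrow>
   (\<And>b b'. b \<in> C2 \<Longrightarrow> b' \<in> C2 \<Longrightarrow> W2 b b' = W2' b b') \<Longrightarrow> kron W1 W2 = kron W1' W2'"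
  by (auto simp: kron_def fun_eq_iff p1_in p2_in)

lemma mat_id_kron: "mat_id C = kron (mat_id C1) (mat_id C2)"
  by (auto simp: kron_def mat_id_def fun_eq_iff p1_in p2_in dest: eq_iff_proj)

lemma mat_adj_kron: "mat_adj (kron W1 W2) = kron (mat_adj W1) (mat_adj W2)"
  by (auto simp: kron_def mat_adj_def fun_eq_iff)

lemma kron_sum_left: "kron (\<Sum>i\<in>I. W i) V = (\<Sum>i\<in>I. kron (W i) V)"
  by (auto simp: kron_def fun_eq_iff sum_apply sum_distrib_right)

lemma kron_sum_right: "kron V (\<Sum>i\<in>I. W i) = (\<Sum>i\<in>I. kron V (W i))"
  by (auto simp: kron_def fun_eq_iff sum_apply sum_distrib_left)

lemma kron_scale_right: "kron V (mat_scale a W) = mat_scale a (kron V W)"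
  by (auto simp: kron_def fun_eq_iff mat_scale_def)

definition lift1 :: "'a mat \<Rightarrow> 'c mat" where "lift1 M = kron M (mat_id C2)"
definition lift2 :: "'b mat \<Rightarrow> 'c mat" where "lift2 N = kron (mat_id C1) N"

lemma mat_on_lift1[simp]: "mat_on C (lift1 M)" and mat_on_lift2[simp]: "mat_on C (lift2 N)"
  by (simp_all add: lift1_def lift2_def)

lemma lift1_lift2_commute: "lift1 M \<odot> lift2 N = lift2 N \<odot> lift1 M"
  unfolding lift1_def lift2_def mat_mul_kron
  by (rule kron_cong) (simp_all add: mat_mul_id_left_apply mat_mul_id_right_apply finite_C1 finite_C2)

lemma lift2_mul: "lift2 N \<odot> lift2 N' = lift2 (mat_mul C2 N N')"
  unfolding lift2_def mat_mul_kron
  by (rule kron_cong) (simp_all add: mat_mul_id_left_apply finite_C1)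

lemma lift2_id: "lift2 (mat_id C2) = mat_id C"
  by (simp add: lift2_def mat_id_kron)

lemma lift2_sum: "lift2 (\<Sum>i\<in>I. N i) = (\<Sum>i\<in>I. lift2 (N i))"
  by (simp add: lift2_def kron_sum_right)

lemma lift2_scale: "lift2 (mat_scale a N) = mat_scale a (lift2 N)"
  by (simp add: lift2_def kron_scale_right)

lemma lift2_pow: "lift2 (mat_pow C2 N j) = mat_pow C (lift2 N) j"
  by (induction j) (simp_all add: lift2_id lift2_mul[symmetric])

definition ptrace1 :: "'c mat \<Rightarrow> 'b mat" where
  "ptrace1 X = (\<lambda>b b'. if b \<in> C2 \<and> b' \<in> C2 then (\<Sum>a\<in>C1. X (join a b) (join a b')) else 0)"

lemma ptrace1_kron_sandwich_apply:
  assumes "b \<in> C2" "b' \<in> C2"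
  shows "ptrace1 (kron W1 W2 \<odot> Y \<odot> kron W3 W4) b b'
    = (\<Sum>d\<in>C. \<Sum>d'\<in>C. (\<Sum>a\<in>C1. W3 (p1 d') a * W1 a (p1 d)) * (W2 b (p2 d) * Y d d' * W4 (p2 d') b'))"
proof -
  define f where "f a d d' = W1 a (p1 d) * W2 b (p2 d) * Y d d' * (W3 (p1 d') a * W4 (p2 d') b')" for a d d'
  have "ptrace1 (kron W1 W2 \<odot> Y \<odot> kron W3 W4) b b' = (\<Sum>a\<in>C1. \<Sum>d'\<in>C. \<Sum>d\<in>C. f a d d')"
    using assms by (simp add: ptrace1_def mat_mul_def kron_def join_in p1_join p2_join f_def sum_distrib_right cong: sum.cong)
  also have "\<dots> = (\<Sum>d\<in>C. \<Sum>d'\<in>C. \<Sum>a\<in>C1. f a d d')"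
    by (subst sum.swap) (subst (2) sum.swap, subst sum.swap, rule refl)
  also have "\<dots> = (\<Sum>d\<in>C. \<Sum>d'\<in>C. (\<Sum>a\<in>C1. W3 (p1 d') a * W1 a (p1 d)) * (W2 b (p2 d) * Y d d' * W4 (p2 d') b'))"
    by (intro sum.cong refl) (simp add: f_def sum_distrib_right sum_distrib_left mult_ac)
  finally show ?thesis .
qed

lemma ptrace1_conj:
  assumes inv: "\<And>a a'. a \<in> C1 \<Longrightarrow> a' \<in> C1 \<Longrightarrow> (\<Sum>a''\<in>C1. W3 a a'' * W1 a'' a') = mat_id C1 a a'"
  shows "ptrace1 (kron W1 W2 \<odot> Y \<odot> kron W3 W4) = mat_mul C2 (mat_mul C2 W2 (ptrace1 Y)) W4"
proof (intro ext)
  fix b b'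
  show "ptrace1 (kron W1 W2 \<odot> Y \<odot> kron W3 W4) b b' = mat_mul C2 (mat_mul C2 W2 (ptrace1 Y)) W4 b b'"
  proof (cases "b \<in> C2 \<and> b' \<in> C2")
    case True
    have "ptrace1 (kron W1 W2 \<odot> Y \<odot> kron W3 W4) b b'
        = (\<Sum>d\<in>C. \<Sum>d'\<in>C. mat_id C1 (p1 d') (p1 d) * (W2 b (p2 d) * Y d d' * W4 (p2 d') b'))"
      using True by (simp add: ptrace1_kron_sandwich_apply inv p1_in cong: sum.cong)
    also have "\<dots> = (\<Sum>a\<in>C1. \<Sum>b1\<in>C2. \<Sum>a2\<in>C1. \<Sum>b2\<in>C2.
        (if a2 = a then 1 else 0) * (W2 b b1 * Y (join a b1) (join a2 b2) * W4 b2 b'))"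
      by (simp add: sum_join p1_join p2_join mat_id_def cong: sum.cong)
    also have "\<dots> = (\<Sum>a\<in>C1. \<Sum>b1\<in>C2. \<Sum>b2\<in>C2. W2 b b1 * Y (join a b1) (join a b2) * W4 b2 b')"
      using finite_C1 by (simp add: sum_delta_mult_collapse cong: sum.cong)
    also have "\<dots> = (\<Sum>b2\<in>C2. \<Sum>b1\<in>C2. \<Sum>a\<in>C1. W2 b b1 * Y (join a b1) (join a b2) * W4 b2 b')"
      by (subst sum.swap) (subst (2) sum.swap, subst sum.swap, rule refl)
    also have "\<dots> = mat_mul C2 (mat_mul C2 W2 (ptrace1 Y)) W4 b b'"
      using True by (simp add: mat_mul_def ptrace1_def sum_distrib_left sum_distrib_right mult_ac cong: sum.cong)
    finally show ?thesis .
  qed (auto simp: ptrace1_def mat_mul_def)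
qed

lemma lift1_unit_mul:
  assumes a: "a \<in> C1" "b \<in> C1"
  shows "lift1 (mat_unit a b) \<odot> Y = (\<lambda>c d. if c \<in> C \<and> d \<in> C \<and> p1 c = a then Y (join b (p2 c)) d else 0)"
proof -
  { fix c d assume cd: "c \<in> C" "d \<in> C"
    have "(lift1 (mat_unit a b) \<odot> Y) c d = (\<Sum>a'\<in>C1. \<Sum>b'\<in>C2.
        (if p1 c = a \<and> a' = b then 1 else 0) * (if p2 c = b' then 1 else 0) * Y (join a' b') d)"
      using cd by (simp add: mat_mul_def lift1_def kron_def sum_join p1_join p2_join join_in mat_unit_def mat_id_def p2_in cong: sum.cong)
    also have "\<dots> = (\<Sum>a'\<in>C1. if a' = b then (if p1 c = a then Y (join a' (p2 c)) d else 0) else 0)"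
    proof (intro sum.cong refl)
      fix a' assume "a' \<in> C1"
      have "(\<Sum>b'\<in>C2. (if p1 c = a \<and> a' = b then 1 else 0) * (if p2 c = b' then 1 else 0) * Y (join a' b') d)
          = (\<Sum>b'\<in>C2. if p2 c = b' then (if p1 c = a \<and> a' = b then Y (join a' b') d else 0) else 0)"
        by (intro sum.cong refl) auto
      also have "\<dots> = (if p1 c = a \<and> a' = b then Y (join a' (p2 c)) d else 0)"
        using finite_C2 p2_in[OF cd(1)] by (simp add: sum.delta)
      finally show "(\<Sum>b'\<in>C2. (if p1 c = a \<and> a' = b then 1 else 0) * (if p2 c = b' then 1 else 0) * Y (join a' b') d)
          = (if a' = b then (if p1 c = a then Y (join a' (p2 c)) d else 0) else 0)" by auto
    qed
    also have "\<dots> = (if p1 c = a then Y (join b (p2 c)) d else 0)"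
      using finite_C1 a by (simp add: sum.delta)
    finally have "(lift1 (mat_unit a b) \<odot> Y) c d = (if p1 c = a then Y (join b (p2 c)) d else 0)" . }
  then show ?thesis by (auto simp: fun_eq_iff mat_mul_def)
qed

lemma mul_lift1_unit:
  assumes a: "a \<in> C1" "b \<in> C1"
  shows "Z \<odot> lift1 (mat_unit b a) = (\<lambda>c e. if c \<in> C \<and> e \<in> C \<and> p1 e = a then Z c (join b (p2 e)) else 0)"
proof -
  { fix c e assume ce: "c \<in> C" "e \<in> C"
    have "(Z \<odot> lift1 (mat_unit b a)) c e = (\<Sum>a'\<in>C1. \<Sum>b'\<in>C2.
        Z c (join a' b') * ((if a' = b \<and> p1 e = a then 1 else 0) * (if b' = p2 e then 1 else 0)))"
      using ce by (simp add: mat_mul_def lift1_def kron_def sum_join p1_join p2_join join_in mat_unit_def mat_id_def p2_in cong: sum.cong)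
    also have "\<dots> = (\<Sum>a'\<in>C1. if a' = b then (if p1 e = a then Z c (join a' (p2 e)) else 0) else 0)"
    proof (intro sum.cong refl)
      fix a' assume "a' \<in> C1"
      have "(\<Sum>b'\<in>C2. Z c (join a' b') * ((if a' = b \<and> p1 e = a then 1 else 0) * (if b' = p2 e then 1 else 0)))
          = (\<Sum>b'\<in>C2. if b' = p2 e then (if a' = b \<and> p1 e = a then Z c (join a' b') else 0) else 0)"
        by (intro sum.cong refl) auto
      also have "\<dots> = (if a' = b \<and> p1 e = a then Z c (join a' (p2 e)) else 0)"
        using finite_C2 p2_in[OF ce(2)] by (simp add: sum.delta)
      finally show "(\<Sum>b'\<in>C2. Z c (join a' b') * ((if a' = b \<and> p1 e = a then 1 else 0) * (if b' = p2 e then 1 else 0)))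
          = (if a' = b then (if p1 e = a then Z c (join a' (p2 e)) else 0) else 0)" by auto
    qed
    also have "\<dots> = (if p1 e = a then Z c (join b (p2 e)) else 0)"
      using finite_C1 a by (simp add: sum.delta)
    finally have "(Z \<odot> lift1 (mat_unit b a)) c e = (if p1 e = a then Z c (join b (p2 e)) else 0)" . }
  then show ?thesis by (auto simp: fun_eq_iff mat_mul_def)
qed

end

context index_product begin

lemma unit_sandwich_sum: "(\<Sum>a\<in>C1. \<Sum>b\<in>C1. lift1 (mat_unit a b) \<odot> Y \<odot> lift1 (mat_unit b a)) = lift2 (ptrace1 Y)"
proof -
  { fix c e assume ce: "c \<in> C" "e \<in> C"
    have "(\<Sum>a\<in>C1. \<Sum>b\<in>C1. lift1 (mat_unit a b) \<odot> Y \<odot> lift1 (mat_unit b a)) c e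
        = (\<Sum>a\<in>C1. \<Sum>b\<in>C1. if a = p1 e then (if p1 c = a then Y (join b (p2 c)) (join b (p2 e)) else 0) else 0)"
      unfolding sum_apply using ce by (intro sum.cong refl) (auto simp: mul_lift1_unit lift1_unit_mul join_in p2_in)
    also have "\<dots> = (\<Sum>a\<in>C1. if a = p1 e then (if p1 c = a then (\<Sum>b\<in>C1. Y (join b (p2 c)) (join b (p2 e))) else 0) else 0)"
      by (intro sum.cong refl) auto
    also have "\<dots> = (if p1 c = p1 e then (\<Sum>b\<in>C1. Y (join b (p2 c)) (join b (p2 e))) else 0)"
      using finite_C1 p1_in[OF ce(2)] by (simp add: sum.delta)
    also have "\<dots> = lift2 (ptrace1 Y) c e"
      using ce by (simp add: lift2_def kron_def mat_id_def ptrace1_def p1_in p2_in)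
    finally have "(\<Sum>a\<in>C1. \<Sum>b\<in>C1. lift1 (mat_unit a b) \<odot> Y \<odot> lift1 (mat_unit b a)) c e = lift2 (ptrace1 Y) c e" . }
  moreover have "mat_on C (\<Sum>a\<in>C1. \<Sum>b\<in>C1. lift1 (mat_unit a b) \<odot> Y \<odot> lift1 (mat_unit b a))"
    by (intro mat_on_sum) simp
  ultimately show ?thesis using mat_onD[OF mat_on_lift2[of "ptrace1 Y"]] unfolding mat_on_def by (intro ext) (metis (no_types, lifting))
qed

lemma sum_lift1_diag_units: "(\<Sum>a\<in>C1. lift1 (mat_unit a a)) = mat_id C"
proof -
  have "(\<Sum>a\<in>C1. lift1 (mat_unit a a)) = kron (\<Sum>a\<in>C1. mat_unit a a) (mat_id C2)"
    by (simp add: lift1_def kron_sum_left)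
  also have "\<dots> = kron (mat_id C1) (mat_id C2)"
  proof (rule kron_cong)
    show "\<And>b b'. mat_id C2 b b' = mat_id C2 b b'" by simp
  next
    fix i j assume ij: "i \<in> C1" "j \<in> C1"
    have "(\<Sum>a\<in>C1. mat_unit a a) i j = (\<Sum>a\<in>C1. if a = i then (if i = j then 1 else 0) else 0)"
      unfolding sum_apply by (intro sum.cong refl) (auto simp: mat_unit_def)
    also have "\<dots> = mat_id C1 i j" using finite_C1 ij by (simp add: mat_id_def)
    finally show "(\<Sum>a\<in>C1. mat_unit a a) i j = mat_id C1 i j" .
  qed
  finally show ?thesis by (simp add: mat_id_kron)
qed

lemma mat_adj_lift1_unit: "mat_adj (lift1 (mat_unit a b)) = lift1 (mat_unit b a)"
  unfolding lift1_def mat_adj_kron mat_adj_id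
  by (rule kron_cong) (auto simp: mat_adj_def mat_unit_def)

lemma compressed_lift2_commute:
  assumes Pidem: "P \<odot> P = P"
    and Mc: "lift1 M' \<odot> P = P \<odot> lift1 M'"
    and MM: "P \<odot> lift1 M \<odot> P = P \<odot> lift1 M' \<odot> P"
  shows "P \<odot> lift2 N \<odot> P \<odot> (P \<odot> lift1 M \<odot> P)
       = P \<odot> lift1 M \<odot> P \<odot> (P \<odot> lift2 N \<odot> P)"
proof -
  note fC = finite_C
  have "P \<odot> lift1 M \<odot> P = P \<odot> lift1 M' \<odot> P" by (rule MM)
  also have "\<dots> = P \<odot> (P \<odot> lift1 M')" by (simp add: mat_mul_assoc[OF fC] Mc)
  also have "\<dots> = P \<odot> P \<odot> lift1 M'" by (simp only: mat_mul_assoc[OF fC])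
  also have "\<dots> = lift1 M' \<odot> P" by (simp add: Pidem Mc)
  finally have Z: "P \<odot> lift1 M \<odot> P = lift1 M' \<odot> P" .
  have PLP: "P \<odot> (lift1 M' \<odot> P) = lift1 M' \<odot> P"
  proof -
    have "P \<odot> (lift1 M' \<odot> P) = P \<odot> P \<odot> lift1 M'" by (simp add: Mc mat_mul_assoc[OF fC])
    then show ?thesis by (simp add: Pidem Mc)
  qed
  have 1: "P \<odot> lift2 N \<odot> P \<odot> (lift1 M' \<odot> P) = P \<odot> (lift2 N \<odot> lift1 M' \<odot> P)"
    by (simp add: mat_mul_assoc[OF fC] PLP)
  have "lift1 M' \<odot> P \<odot> (P \<odot> lift2 N \<odot> P) = lift1 M' \<odot> (P \<odot> P) \<odot> (lift2 N \<odot> P)"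
    by (simp only: mat_mul_assoc[OF fC])
  also have "\<dots> = P \<odot> lift1 M' \<odot> (lift2 N \<odot> P)"
    by (simp add: Pidem Mc)
  finally have 2: "lift1 M' \<odot> P \<odot> (P \<odot> lift2 N \<odot> P) = P \<odot> (lift1 M' \<odot> lift2 N \<odot> P)"
    by (simp add: mat_mul_assoc[OF fC])
  show ?thesis unfolding Z 1 2 lift1_lift2_commute ..
qed

lemma compression_ptrace_factor:
  assumes P: "P \<odot> P = P"
    and X: "P \<odot> X = X" "X \<odot> P = X"
    and comm: "\<And>M. X \<odot> (P \<odot> lift1 M \<odot> P) = P \<odot> lift1 M \<odot> P \<odot> X"
  shows "P \<odot> lift2 (ptrace1 X) \<odot> P = X \<odot> (P \<odot> lift2 (ptrace1 P) \<odot> P)"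
proof -
  note assoc = mat_mul_assoc[OF finite_C]
  define E where "E a b = lift1 (mat_unit a b)" for a b
  have Xeq: "X = P \<odot> X \<odot> P"
    using X by simp
  have PP: "P \<odot> (P \<odot> Y) = P \<odot> Y" for Y
    by (simp add: assoc[symmetric] P)
  have summand: "P \<odot> (E a b \<odot> X \<odot> E b a) \<odot> P = X \<odot> (P \<odot> (E a b \<odot> P \<odot> E b a) \<odot> P)" for a b
  proof -
    have "P \<odot> (E a b \<odot> X \<odot> E b a) \<odot> P = P \<odot> E a b \<odot> P \<odot> X \<odot> (P \<odot> E b a \<odot> P)"
      by (subst (1) Xeq) (simp only: assoc)
    also have "\<dots> = X \<odot> (P \<odot> E a b \<odot> P) \<odot> (P \<odot> E b a \<odot> P)"
      unfolding E_def by (simp only: comm)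
    also have "\<dots> = X \<odot> (P \<odot> (E a b \<odot> P \<odot> E b a) \<odot> P)"
      by (simp only: assoc PP)
    finally show ?thesis .
  qed
  have "P \<odot> lift2 (ptrace1 X) \<odot> P = (\<Sum>a\<in>C1. \<Sum>b\<in>C1. P \<odot> (E a b \<odot> X \<odot> E b a) \<odot> P)"
    by (simp add: unit_sandwich_sum[symmetric] E_def mat_mul_sum_left mat_mul_sum_right)
  also have "\<dots> = (\<Sum>a\<in>C1. \<Sum>b\<in>C1. X \<odot> (P \<odot> (E a b \<odot> P \<odot> E b a) \<odot> P))"
    by (simp only: summand)
  also have "\<dots> = X \<odot> (P \<odot> lift2 (ptrace1 P) \<odot> P)"
    by (simp add: unit_sandwich_sum[symmetric] E_def mat_mul_sum_left mat_mul_sum_right)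
  finally show ?thesis .
qed

(* Positivity: \<open>P (1 \<otimes> tr\<^sub>1 P) P\<close> is a sum of operators \<open>P E P E\<^sup>* P\<close>, so it only
   annihilates vectors that \<open>P\<close> annihilates. *)

lemma compression_ptrace_kernel:
  assumes P: "mat_on C P" "P \<odot> P = P" "mat_adj P = P"
    and z: "\<And>c. c \<in> C \<Longrightarrow> mat_vec C (P \<odot> lift2 (ptrace1 P) \<odot> P) z c = 0"
    and c: "c \<in> C"
  shows "mat_vec C P z c = 0"
proof -
  note assoc = mat_mul_assoc[OF finite_C]
  define E where "E a b = lift1 (mat_unit a b)" for a b
  define v where "v ab = mat_vec C P (mat_vec C (mat_adj (E (fst ab) (snd ab))) (mat_vec C P z))" for ab
  have "P \<odot> lift2 (ptrace1 P) \<odot> P = (\<Sum>a\<in>C1. \<Sum>b\<in>C1. P \<odot> (E a b \<odot> (P \<odot> (mat_adj (E a b) \<odot> P))))"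
    by (simp add: unit_sandwich_sum[symmetric] E_def mat_adj_lift1_unit
        mat_mul_sum_left mat_mul_sum_right assoc)
  then have "vinner C z (mat_vec C (P \<odot> lift2 (ptrace1 P) \<odot> P) z)
      = vinner C z (\<lambda>c. \<Sum>a\<in>C1. \<Sum>b\<in>C1. mat_vec C (P \<odot> (E a b \<odot> (P \<odot> (mat_adj (E a b) \<odot> P)))) z c)"
    by (intro vinner_cong) (simp_all add: mat_vec_sum)
  also have "\<dots> = (\<Sum>a\<in>C1. \<Sum>b\<in>C1. vinner C z (mat_vec C (P \<odot> (E a b \<odot> (P \<odot> (mat_adj (E a b) \<odot> P)))) z))"
    by (simp only: vinner_sum_right)
  also have "\<dots> = (\<Sum>a\<in>C1. \<Sum>b\<in>C1. vinner C (v (a, b)) (v (a, b)))"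
    by (simp only: vinner_sandwich[OF finite_C P(3,2)] v_def fst_conv snd_conv)
  also have "\<dots> = (\<Sum>ab\<in>C1 \<times> C1. vinner C (v ab) (v ab))"
    by (simp add: sum.cartesian_product split_def)
  finally have "(\<Sum>ab\<in>C1 \<times> C1. vinner C (v ab) (v ab)) = 0"
    using z by (simp add: vinner_zero_right)
  then have v0: "v (a, a) c = 0" if "a \<in> C1" for a
    using sum_vinner_self_eq_0[of "C1 \<times> C1" C v] finite_C1 finite_C that c by blast
  have "mat_vec C P z c = mat_vec C (P \<odot> mat_id C \<odot> P) z c"
    by (simp add: mat_mul_id_right[OF P(1) finite_C] P(2))
  also have "\<dots> = mat_vec C P (mat_vec C (mat_id C) (mat_vec C P z)) c"
    using c by (simp add: mat_vec_mul)
  also have "\<dots> = mat_vec C P (\<lambda>d. \<Sum>a\<in>C1. mat_vec C (E a a) (mat_vec C P z) d) c"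
    by (rule mat_vec_cong) (simp add: sum_lift1_diag_units[symmetric] E_def mat_vec_sum)
  also have "\<dots> = (\<Sum>a\<in>C1. v (a, a) c)"
    by (simp add: mat_vec_sum_vec v_def E_def mat_adj_lift1_unit)
  also have "\<dots> = 0"
    by (simp add: v0)
  finally show ?thesis .
qed

lemma mat_injective_compression_ptrace:
  assumes P: "mat_on C P" "P \<odot> P = P" "mat_adj P = P"
  shows "mat_injective C (P \<odot> lift2 (ptrace1 P) \<odot> P + mat_id C - P)"
  unfolding mat_injective_def
proof (intro allI impI ballI)
  fix z c
  define Q where "Q = P \<odot> lift2 (ptrace1 P) \<odot> P"
  assume z: "\<forall>c\<in>C. mat_vec C (Q + mat_id C - P) z c = 0" and c: "c \<in> C"
  have "P \<odot> (Q + mat_id C - P) = Q"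
    by (simp add: Q_def mat_mul_add_right mat_mul_diff_right mat_mul_id_right[OF P(1) finite_C] P(2)
        mat_mul_assoc[OF finite_C, symmetric])
  then have Qz: "mat_vec C Q z d = 0" if "d \<in> C" for d
  proof -
    have "mat_vec C Q z d = mat_vec C (P \<odot> (Q + mat_id C - P)) z d"
      by (simp only: \<open>P \<odot> (Q + mat_id C - P) = Q\<close>)
    also have "\<dots> = mat_vec C P (mat_vec C (Q + mat_id C - P) z) d"
      using that by (rule mat_vec_mul)
    also have "\<dots> = mat_vec C P (\<lambda>_. 0) d"
      using z by (intro mat_vec_cong) simp
    finally show ?thesis
      by (simp add: mat_vec_def)
  qed
  have "0 = mat_vec C (Q + mat_id C - P) z c"
    using z c by simp
  also have "\<dots> = z c"
    using Qz[OF c] compression_ptrace_kernel[OF P Qz[unfolded Q_def] c]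
    by (simp add: mat_vec_add mat_vec_diff mat_vec_id[OF finite_C c])
  finally show "z c = 0" ..
qed

lemma compressed_commutant_lift2:
  assumes P: "mat_on C P" "P \<odot> P = P" "mat_adj P = P"
    and LP: "lift2 (ptrace1 P) \<odot> P = P \<odot> lift2 (ptrace1 P)"
    and X: "mat_on C X" "P \<odot> X = X" "X \<odot> P = X"
    and comm: "\<And>M. X \<odot> (P \<odot> lift1 M \<odot> P) = P \<odot> lift1 M \<odot> P \<odot> X"
  shows "\<exists>N. X = P \<odot> lift2 N \<odot> P"
proof -
  note assoc = mat_mul_assoc[OF finite_C]
  have PP: "P \<odot> (P \<odot> Y) = P \<odot> Y" for Y
    by (simp add: assoc[symmetric] P(2))
  define R where "R = ptrace1 P"
  define Q where "Q = lift2 R \<odot> P + mat_id C - P"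
  have "P \<odot> lift2 R \<odot> P = lift2 R \<odot> P"
    using LP by (simp add: R_def assoc) (simp add: assoc[symmetric] P(2))
  then have "mat_injective C Q"
    using mat_injective_compression_ptrace[OF P] by (simp add: Q_def R_def)
  then obtain J b where inv: "Q \<odot> (\<Sum>j<J. mat_scale (b j) (mat_pow C Q j)) = mat_id C"
    using mat_injective_polynomial_inverse[OF finite_C] by blast
  define N where "N = (\<Sum>j<J. mat_scale (b j) (mat_pow C2 R j))"
  have invP: "(\<Sum>j<J. mat_scale (b j) (mat_pow C Q j)) \<odot> P = lift2 N \<odot> P"
    using mat_pow_shifted_compression[OF finite_C P(1,2) LP[folded R_def]]
    by (simp add: N_def Q_def mat_mul_sum_left mat_mul_scale_left lift2_sum lift2_scale lift2_pow)
  have NP: "lift2 N \<odot> P = P \<odot> lift2 N"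
    using mat_pow_commute[OF finite_C P(1) LP[folded R_def]]
    by (simp add: N_def lift2_sum lift2_scale lift2_pow mat_mul_sum_left mat_mul_sum_right
        mat_mul_scale_left mat_mul_scale_right)
  have "X \<odot> Q = X \<odot> (P \<odot> lift2 R \<odot> P)"
    using X(1,3) \<open>P \<odot> lift2 R \<odot> P = lift2 R \<odot> P\<close>
    by (simp add: Q_def mat_mul_add_right mat_mul_diff_right mat_mul_id_right[OF X(1) finite_C])
  also have "\<dots> = P \<odot> lift2 (ptrace1 X) \<odot> P"
    using compression_ptrace_factor[OF P(2) X(2,3) comm] by (simp add: R_def)
  finally have XQ: "X \<odot> Q = P \<odot> lift2 (ptrace1 X) \<odot> P" .
  have "X = X \<odot> (Q \<odot> (\<Sum>j<J. mat_scale (b j) (mat_pow C Q j))) \<odot> P"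
    by (simp add: inv mat_mul_id_right[OF X(1) finite_C] X(3))
  also have "\<dots> = X \<odot> Q \<odot> (lift2 N \<odot> P)"
    by (simp only: assoc invP)
  also have "\<dots> = P \<odot> lift2 (ptrace1 X) \<odot> P \<odot> (lift2 N \<odot> P)"
    by (simp only: XQ)
  also have "\<dots> = P \<odot> (lift2 (ptrace1 X) \<odot> lift2 N) \<odot> P"
    by (simp only: assoc NP PP)
  also have "\<dots> = P \<odot> lift2 (mat_mul C2 (ptrace1 X) N) \<odot> P"
    by (simp only: lift2_mul)
  finally show ?thesis by blast
qed

end

section \<open>Tensor products over sites\<close>

lemma tensor_mul:
  assumes fT: "finite T"
  shows "mat_mul (confs T D) (tensor T D Op1) (tensor T D Op2) = tensor T D (\<lambda>x i j. \<Sum>k<D x. Op1 x i k * Op2 x k j)"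
proof -
  { fix c c'' assume c: "c \<in> confs T D" "c'' \<in> confs T D"
    have "mat_mul (confs T D) (tensor T D Op1) (tensor T D Op2) c c''
        = (\<Sum>c'\<in>confs T D. \<Prod>x\<in>T. Op1 x (c x) (c' x) * Op2 x (c' x) (c'' x))"
      using c by (simp add: mat_mul_def tensor_def prod.distrib)
    also have "\<dots> = (\<Prod>x\<in>T. \<Sum>k<D x. Op1 x (c x) k * Op2 x k (c'' x))"
      unfolding confs_def by (rule prod_sum_PiE[symmetric]) (simp_all add: fT)
    finally have "mat_mul (confs T D) (tensor T D Op1) (tensor T D Op2) c c'' = tensor T D (\<lambda>x i j. \<Sum>k<D x. Op1 x i k * Op2 x k j) c c''"
      using c by (simp add: tensor_def) }
  then show ?thesis by (auto simp: fun_eq_iff mat_mul_def tensor_def)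
qed

lemma tensor_cong:
  assumes "\<And>x i j. x \<in> T \<Longrightarrow> i < D x \<Longrightarrow> j < D x \<Longrightarrow> Op x i j = Op' x i j"
  shows "tensor T D Op = tensor T D Op'"
  using assms by (auto simp: tensor_def fun_eq_iff confs_def PiE_def Pi_def intro!: prod.cong)

lemma tensor_kdelta: "finite T \<Longrightarrow> tensor T D (\<lambda>_. kdelta) = mat_id (confs T D)"
proof -
  assume fT: "finite T"
  { fix c c' assume c: "c \<in> confs T D" "c' \<in> confs T D"
    have "(\<Prod>x\<in>T. kdelta (c x) (c' x)) = (if c = c' then 1 else 0)"
    proof (cases "c = c'")
      case True then show ?thesis by (simp add: kdelta_def)
    next
      case False
      then obtain x where x: "c x \<noteq> c' x" by auto
      then have "x \<in> T" using c by (metis PiE_arb confs_def)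
      then show ?thesis using False x fT by (auto simp: kdelta_def intro!: prod_zero bexI[of _ x])
    qed }
  then show ?thesis by (auto simp: tensor_def mat_id_def fun_eq_iff)
qed

lemma mat_adj_tensor: "mat_adj (tensor T D Op) = tensor T D (\<lambda>x i j. cnj (Op x j i))"
  by (auto simp: tensor_def mat_adj_def fun_eq_iff)

lemma mat_on_tensor[simp]: "mat_on (confs T D) (tensor T D Op)"
  by (simp add: mat_on_def tensor_def)

definition merge_conf :: "'x set \<Rightarrow> 'x cfg \<Rightarrow> 'x cfg \<Rightarrow> 'x cfg" where
  "merge_conf r a b = (\<lambda>x. if x \<in> r then a x else b x)"

lemma index_product_confs:
  assumes fS: "finite S" and rS: "r \<subseteq> S"
  shows "index_product (confs S D) (confs r D) (confs (S - r) D) (\<lambda>c. restrict c r) (\<lambda>c. restrict c (S - r)) (merge_conf r)"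
proof
  show "finite (confs r D)" using fS rS by (auto simp: confs_def intro!: finite_PiE intro: finite_subset)
  show "finite (confs (S - r) D)" using fS by (auto simp: confs_def intro!: finite_PiE)
  fix c assume "c \<in> confs S D"
  then show "restrict c r \<in> confs r D" "restrict c (S - r) \<in> confs (S - r) D"
      "merge_conf r (restrict c r) (restrict c (S - r)) = c"
    using rS by (auto simp: confs_def merge_conf_def PiE_def extensional_def fun_eq_iff)
next
  fix a b assume ab: "a \<in> confs r D" "b \<in> confs (S - r) D"
  then show "merge_conf r a b \<in> confs S D" "restrict (merge_conf r a b) r = a" "restrict (merge_conf r a b) (S - r) = b"
    using rS by (auto simp: confs_def merge_conf_def PiE_def extensional_def fun_eq_iff Pi_def)
qed

lemma tensor_split:
  assumes fS: "finite S" and rS: "r \<subseteq> S"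
  shows "tensor S D Op = index_product.kron (confs S D) (\<lambda>c. restrict c r) (\<lambda>c. restrict c (S - r)) (tensor r D Op) (tensor (S - r) D Op)"
proof -
  interpret index_product "confs S D" "confs r D" "confs (S - r) D" "\<lambda>c. restrict c r" "\<lambda>c. restrict c (S - r)" "merge_conf r"
    by (rule index_product_confs[OF fS rS])
  { fix c c' assume c: "c \<in> confs S D" "c' \<in> confs S D"
    have "(\<Prod>x\<in>S. Op x (c x) (c' x)) = (\<Prod>x\<in>r. Op x (c x) (c' x)) * (\<Prod>x\<in>S - r. Op x (c x) (c' x))"
      using fS rS by (metis (no_types, lifting) prod.subset_diff mult.commute)
    then have "tensor S D Op c c' = kron (tensor r D Op) (tensor (S - r) D Op) c c'"
      using c p1_in p2_in by (simp add: tensor_def kron_def) }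
  then show ?thesis by (auto simp: fun_eq_iff tensor_def kron_def)
qed

section \<open>Haar measure and translation matrices\<close>

lemma mult_le_sum_squares: "0 \<le> u \<Longrightarrow> 0 \<le> v \<Longrightarrow> u * v \<le> u\<^sup>2 + (v::real)\<^sup>2"
  using sum_squares_bound[of u v] mult_nonneg_nonneg[of u v] by linarith

lemma borel_measurable_cnj:
  "f \<in> borel_measurable M \<Longrightarrow> (\<lambda>x. cnj (f x :: complex)) \<in> borel_measurable M"
  using borel_measurable_continuous_onI[OF continuous_on_cnj[OF continuous_on_id]] measurable_compose
  by blast

locale haar =
  fixes \<mu> :: "'g::{topological_group_add, t2_space, second_countable_topology} measure"
  assumes haar: "haar_measure \<mu>"
begin

lemma sets_haar: "sets \<mu> = sets borel" using haar by (simp add: haar_measure_def)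
lemma prob_space_haar: "prob_space \<mu>" using haar by (simp add: haar_measure_def)
lemma distr_left: "distr \<mu> \<mu> (\<lambda>x. h + x) = \<mu>" using haar by (simp add: haar_measure_def)
lemma distr_right: "distr \<mu> \<mu> (\<lambda>x. x + h) = \<mu>" using haar by (simp add: haar_measure_def)

sublocale prob: prob_space \<mu>
  by (rule prob_space_haar)

lemma measurable_haar_eq: "measurable \<mu> N = measurable borel N"
  by (rule measurable_cong_sets[OF sets_haar refl])

lemma measurable_haar_haar_eq: "measurable \<mu> \<mu> = measurable borel borel"
  by (rule measurable_cong_sets[OF sets_haar sets_haar])

lemma continuous_imp_measurable_haar: "continuous_on UNIV (f :: 'g \<Rightarrow> 'b::topological_space) \<Longrightarrow> f \<in> borel_measurable \<mu>"
  unfolding measurable_haar_eq by (rule borel_measurable_continuous_onI)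

lemma measurable_translate_left: "(\<lambda>x. h + x) \<in> measurable \<mu> \<mu>"
  unfolding measurable_haar_haar_eq by (rule borel_measurable_continuous_onI) (intro continuous_intros)

lemma measurable_translate_right: "(\<lambda>x. x + h) \<in> measurable \<mu> \<mu>"
  unfolding measurable_haar_haar_eq by (rule borel_measurable_continuous_onI) (intro continuous_intros)

lemma measurable_comp_translate_left: "f \<in> borel_measurable \<mu> \<Longrightarrow> (\<lambda>x. f (h + x)) \<in> borel_measurable \<mu>"
  using measurable_compose[OF measurable_translate_left] by blast

lemma measurable_comp_translate_right: "f \<in> borel_measurable \<mu> \<Longrightarrow> (\<lambda>x. f (x + h)) \<in> borel_measurable \<mu>"
  using measurable_compose[OF measurable_translate_right] by blast

lemma integral_translate_left:
  fixes f :: "'g \<Rightarrow> 'b::{banach, second_countable_topology}"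
  assumes "f \<in> borel_measurable \<mu>"
  shows "(LINT x|\<mu>. f (h + x)) = (LINT x|\<mu>. f x)"
  using integral_distr[OF measurable_translate_left assms, of h] distr_left by simp

lemma integral_translate_right:
  fixes f :: "'g \<Rightarrow> 'b::{banach, second_countable_topology}"
  assumes "f \<in> borel_measurable \<mu>"
  shows "(LINT x|\<mu>. f (x + h)) = (LINT x|\<mu>. f x)"
  using integral_distr[OF measurable_translate_right assms, of h] distr_right by simp

lemma integrable_translate_left:
  fixes f :: "'g \<Rightarrow> 'b::{banach, second_countable_topology}"
  assumes "f \<in> borel_measurable \<mu>" "integrable \<mu> f"
  shows "integrable \<mu> (\<lambda>x. f (h + x))"
  using integrable_distr_eq[OF measurable_translate_left assms(1), of h] distr_left assms(2) by simp

lemma integrable_translate_right: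
  fixes f :: "'g \<Rightarrow> 'b::{banach, second_countable_topology}"
  assumes "f \<in> borel_measurable \<mu>" "integrable \<mu> f"
  shows "integrable \<mu> (\<lambda>x. f (x + h))"
  using integrable_distr_eq[OF measurable_translate_right assms(1), of h] distr_right assms(2) by simp

lemma AE_translate_left: assumes "AE x in \<mu>. P x" shows "AE x in \<mu>. P (h + x)"
proof -
  have "AE x in distr \<mu> \<mu> (\<lambda>x. h + x). P x" by (subst distr_left) (rule assms)
  then show ?thesis by (rule AE_distrD[OF measurable_translate_left])
qed

lemma AE_translate_right: assumes "AE x in \<mu>. P x" shows "AE x in \<mu>. P (x + h)"
proof -
  have "AE x in distr \<mu> \<mu> (\<lambda>x. x + h). P x" by (subst distr_right) (rule assms)
  then show ?thesis by (rule AE_distrD[OF measurable_translate_right])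
qed

lemma integrable_cnj_mult:
  fixes a b :: "'g \<Rightarrow> complex"
  assumes am: "a \<in> borel_measurable \<mu>" and bdd_meas: "b \<in> borel_measurable \<mu>"
    and ai: "integrable \<mu> (\<lambda>x. (cmod (a x))\<^sup>2)" and bi: "integrable \<mu> (\<lambda>x. (cmod (b x))\<^sup>2)"
  shows "integrable \<mu> (\<lambda>x. cnj (a x) * b x)"
proof (rule Bochner_Integration.integrable_bound[where f="\<lambda>x. (cmod (a x))\<^sup>2 + (cmod (b x))\<^sup>2"])
  show "integrable \<mu> (\<lambda>x. (cmod (a x))\<^sup>2 + (cmod (b x))\<^sup>2)" using ai bi by simp
  show "(\<lambda>x. cnj (a x) * b x) \<in> borel_measurable \<mu>" by (intro borel_measurable_times borel_measurable_cnj am bdd_meas)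
  show "AE x in \<mu>. norm (cnj (a x) * b x) \<le> norm ((cmod (a x))\<^sup>2 + (cmod (b x))\<^sup>2)"
  proof (rule AE_I2)
    fix x
    have "cmod (a x) * cmod (b x) \<le> (cmod (a x))\<^sup>2 + (cmod (b x))\<^sup>2"
      by (rule mult_le_sum_squares) simp_all
    then show "norm (cnj (a x) * b x) \<le> norm ((cmod (a x))\<^sup>2 + (cmod (b x))\<^sup>2)"
      by (simp add: norm_mult)
  qed
qed

end

locale trunc_basis = haar \<mu> for \<mu> :: "'g::{topological_group_add, t2_space, second_countable_topology} measure" +
  fixes N :: nat and f :: "nat \<Rightarrow> 'g \<Rightarrow> complex"
  assumes basis: "L2_trunc_basis \<mu> N f"
begin

lemma basis_measurable: "i < N \<Longrightarrow> f i \<in> borel_measurable \<mu>" using basis by (simp add: L2_trunc_basis_def)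
lemma basis_square_integrable: "i < N \<Longrightarrow> integrable \<mu> (\<lambda>x. (cmod (f i x))\<^sup>2)" using basis by (simp add: L2_trunc_basis_def)
lemma basis_orthonormal: "i < N \<Longrightarrow> j < N \<Longrightarrow> (LINT x|\<mu>. cnj (f i x) * f j x) = kdelta i j"
  using basis by (simp add: L2_trunc_basis_def)

lemma basis_square_measurable: "i < N \<Longrightarrow> (\<lambda>x. (cmod (f i x))\<^sup>2) \<in> borel_measurable \<mu>"
  using basis_measurable by measurable

lemma basis_measurable_left: "i < N \<Longrightarrow> (\<lambda>x. f i (h + x)) \<in> borel_measurable \<mu>" using basis_measurable measurable_comp_translate_left by blast
lemma basis_measurable_right: "i < N \<Longrightarrow> (\<lambda>x. f i (x + h)) \<in> borel_measurable \<mu>" using basis_measurable measurable_comp_translate_right by blast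
lemma basis_square_integrable_left: "i < N \<Longrightarrow> integrable \<mu> (\<lambda>x. (cmod (f i (h + x)))\<^sup>2)"
  using integrable_translate_left[OF basis_square_measurable basis_square_integrable] by blast
lemma basis_square_integrable_right: "i < N \<Longrightarrow> integrable \<mu> (\<lambda>x. (cmod (f i (x + h)))\<^sup>2)"
  using integrable_translate_right[OF basis_square_measurable basis_square_integrable] by blast

lemma integrable_basis_inner: "i < N \<Longrightarrow> j < N \<Longrightarrow> integrable \<mu> (\<lambda>x. cnj (f i x) * f j x)"
  by (rule integrable_cnj_mult[OF basis_measurable basis_measurable basis_square_integrable basis_square_integrable])
lemma integrable_basis_inner_left: "i < N \<Longrightarrow> j < N \<Longrightarrow> integrable \<mu> (\<lambda>x. cnj (f i x) * f j (h + x))"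
  by (rule integrable_cnj_mult[OF basis_measurable basis_measurable_left basis_square_integrable basis_square_integrable_left])
lemma integrable_basis_inner_right: "i < N \<Longrightarrow> j < N \<Longrightarrow> integrable \<mu> (\<lambda>x. cnj (f i x) * f j (x + h))"
  by (rule integrable_cnj_mult[OF basis_measurable basis_measurable_right basis_square_integrable basis_square_integrable_right])

lemma basis_coefficient:
  assumes j: "k < N" and a: "AE x in \<mu>. F x = (\<Sum>i<N. a i * f i x)" and Fm: "F \<in> borel_measurable \<mu>"
  shows "(LINT x|\<mu>. cnj (f k x) * F x) = a k"
proof -
  have "(LINT x|\<mu>. cnj (f k x) * F x) = (LINT x|\<mu>. cnj (f k x) * (\<Sum>i<N. a i * f i x))"
  proof (rule integral_cong_AE)
    show "(\<lambda>x. cnj (f k x) * F x) \<in> borel_measurable \<mu>" by (intro borel_measurable_times borel_measurable_cnj basis_measurable[OF j] Fm)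
    show "(\<lambda>x. cnj (f k x) * (\<Sum>i<N. a i * f i x)) \<in> borel_measurable \<mu>"
      by (intro borel_measurable_times borel_measurable_cnj basis_measurable[OF j] borel_measurable_sum borel_measurable_const basis_measurable) auto
    show "AE x in \<mu>. cnj (f k x) * F x = cnj (f k x) * (\<Sum>i<N. a i * f i x)" using a by eventually_elim simp
  qed
  also have "\<dots> = (LINT x|\<mu>. (\<Sum>i<N. a i * (cnj (f k x) * f i x)))"
    by (simp add: sum_distrib_left mult_ac)
  also have "\<dots> = (\<Sum>i<N. a i * (LINT x|\<mu>. cnj (f k x) * f i x))"
    using integrable_basis_inner[OF j] by (simp add: integral_sum)
  also have "\<dots> = (\<Sum>i<N. a i * kdelta k i)" using basis_orthonormal[OF j] by simp
  also have "\<dots> = a k" using j by (simp add: kdelta_def if_distrib cong: if_cong)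
  finally show ?thesis .
qed

lemma Lmat_expansion: "j < N \<Longrightarrow> AE x in \<mu>. f j (- g + x) = (\<Sum>i<N. Lmat \<mu> f g i j * f i x)"
proof -
  assume j: "j < N"
  have "\<exists>a. AE x in \<mu>. f j (- g + x) = (\<Sum>i<N. a i * f i x)"
    using basis j unfolding L2_trunc_basis_def by blast
  then obtain a where a: "AE x in \<mu>. f j (- g + x) = (\<Sum>i<N. a i * f i x)" by blast
  have coefs: "Lmat \<mu> f g k j = a k" if "k < N" for k
    unfolding Lmat_def by (rule basis_coefficient[OF that a basis_measurable_left[OF j]])
  from a show ?thesis by (rule eventually_mono) (simp add: coefs)
qed

lemma Rinvmat_expansion: "j < N \<Longrightarrow> AE x in \<mu>. f j (x + g) = (\<Sum>i<N. Rinvmat \<mu> f g i j * f i x)"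
proof -
  assume j: "j < N"
  have "\<exists>a. AE x in \<mu>. f j (x + g) = (\<Sum>i<N. a i * f i x)"
    using basis j unfolding L2_trunc_basis_def by blast
  then obtain a where a: "AE x in \<mu>. f j (x + g) = (\<Sum>i<N. a i * f i x)" by blast
  have coefs: "Rinvmat \<mu> f g k j = a k" if "k < N" for k
    unfolding Rinvmat_def by (rule basis_coefficient[OF that a basis_measurable_right[OF j]])
  from a show ?thesis by (rule eventually_mono) (simp add: coefs)
qed

lemma Lmat_zero: "i < N \<Longrightarrow> j < N \<Longrightarrow> Lmat \<mu> f 0 i j = kdelta i j"
  by (simp add: Lmat_def basis_orthonormal)

lemma Rinvmat_zero: "i < N \<Longrightarrow> j < N \<Longrightarrow> Rinvmat \<mu> f 0 i j = kdelta i j"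
  by (simp add: Rinvmat_def basis_orthonormal)

lemma measurable_basis_sum_left: "i < N \<Longrightarrow> (\<lambda>x. cnj (f i x) * (\<Sum>k<N. c k * f k (h + x))) \<in> borel_measurable \<mu>"
  by (intro borel_measurable_times borel_measurable_cnj basis_measurable borel_measurable_sum borel_measurable_const basis_measurable_left) auto

lemma measurable_basis_sum_right: "i < N \<Longrightarrow> (\<lambda>x. cnj (f i x) * (\<Sum>k<N. c k * f k (x + h))) \<in> borel_measurable \<mu>"
  by (intro borel_measurable_times borel_measurable_cnj basis_measurable borel_measurable_sum borel_measurable_const basis_measurable_right) auto

lemma integral_basis_sum_left: "i < N \<Longrightarrow> (LINT x|\<mu>. cnj (f i x) * (\<Sum>k<N. c k * f k (h + x))) = (\<Sum>k<N. c k * (LINT x|\<mu>. cnj (f i x) * f k (h + x)))"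
proof -
  assume i: "i < N"
  have "(LINT x|\<mu>. cnj (f i x) * (\<Sum>k<N. c k * f k (h + x))) = (LINT x|\<mu>. (\<Sum>k<N. c k * (cnj (f i x) * f k (h + x))))"
    by (simp add: sum_distrib_left mult_ac)
  also have "\<dots> = (\<Sum>k<N. c k * (LINT x|\<mu>. cnj (f i x) * f k (h + x)))"
    using integrable_basis_inner_left[OF i] by (simp add: integral_sum)
  finally show ?thesis .
qed

lemma integral_basis_sum_right: "i < N \<Longrightarrow> (LINT x|\<mu>. cnj (f i x) * (\<Sum>k<N. c k * f k (x + h))) = (\<Sum>k<N. c k * (LINT x|\<mu>. cnj (f i x) * f k (x + h)))"
proof -
  assume i: "i < N"
  have "(LINT x|\<mu>. cnj (f i x) * (\<Sum>k<N. c k * f k (x + h))) = (LINT x|\<mu>. (\<Sum>k<N. c k * (cnj (f i x) * f k (x + h))))"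
    by (simp add: sum_distrib_left mult_ac)
  also have "\<dots> = (\<Sum>k<N. c k * (LINT x|\<mu>. cnj (f i x) * f k (x + h)))"
    using integrable_basis_inner_right[OF i] by (simp add: integral_sum)
  finally show ?thesis .
qed

lemma Lmat_add: assumes i: "i < N" and j: "j < N"
  shows "(\<Sum>k<N. Lmat \<mu> f g i k * Lmat \<mu> f h k j) = Lmat \<mu> f (g + h) i j"
proof -
  have ae: "AE x in \<mu>. f j (- h + (- g + x)) = (\<Sum>k<N. Lmat \<mu> f h k j * f k (- g + x))"
    using AE_translate_left[OF Lmat_expansion[OF j, of h], of "- g"] .
  have e: "\<And>x. - (g + h) + x = - h + (- g + x)" by (simp only: minus_add add.assoc)
  have "Lmat \<mu> f (g + h) i j = (LINT x|\<mu>. cnj (f i x) * f j (- h + (- g + x)))"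
    unfolding Lmat_def e ..
  also have "\<dots> = (LINT x|\<mu>. cnj (f i x) * (\<Sum>k<N. Lmat \<mu> f h k j * f k (- g + x)))"
  proof (rule integral_cong_AE)
    have "(\<lambda>x. f j (- h + (- g + x))) \<in> borel_measurable \<mu>"
      using measurable_comp_translate_left[OF basis_measurable_left[OF j, of "- h"], of "- g"] by simp
    then show "(\<lambda>x. cnj (f i x) * f j (- h + (- g + x))) \<in> borel_measurable \<mu>"
      by (intro borel_measurable_times borel_measurable_cnj basis_measurable[OF i])
    show "(\<lambda>x. cnj (f i x) * (\<Sum>k<N. Lmat \<mu> f h k j * f k (- g + x))) \<in> borel_measurable \<mu>"
      by (rule measurable_basis_sum_left[OF i])
    show "AE x in \<mu>. cnj (f i x) * f j (- h + (- g + x)) = cnj (f i x) * (\<Sum>k<N. Lmat \<mu> f h k j * f k (- g + x))"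
      using ae by (rule eventually_mono) simp
  qed
  also have "\<dots> = (\<Sum>k<N. Lmat \<mu> f h k j * Lmat \<mu> f g i k)"
    by (simp add: integral_basis_sum_left[OF i] Lmat_def)
  finally show ?thesis by (simp add: mult.commute)
qed

lemma Rinvmat_add: assumes i: "i < N" and j: "j < N"
  shows "(\<Sum>k<N. Rinvmat \<mu> f g i k * Rinvmat \<mu> f h k j) = Rinvmat \<mu> f (g + h) i j"
proof -
  have ae: "AE x in \<mu>. f j ((x + g) + h) = (\<Sum>k<N. Rinvmat \<mu> f h k j * f k (x + g))"
    using AE_translate_right[OF Rinvmat_expansion[OF j, of h], of g] .
  have e: "\<And>x. x + (g + h) = (x + g) + h" by (simp only: add.assoc)
  have "Rinvmat \<mu> f (g + h) i j = (LINT x|\<mu>. cnj (f i x) * f j ((x + g) + h))"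
    unfolding Rinvmat_def e ..
  also have "\<dots> = (LINT x|\<mu>. cnj (f i x) * (\<Sum>k<N. Rinvmat \<mu> f h k j * f k (x + g)))"
  proof (rule integral_cong_AE)
    have "(\<lambda>x. f j ((x + g) + h)) \<in> borel_measurable \<mu>"
      using measurable_comp_translate_right[OF basis_measurable_right[OF j, of h], of g] by simp
    then show "(\<lambda>x. cnj (f i x) * f j ((x + g) + h)) \<in> borel_measurable \<mu>"
      by (intro borel_measurable_times borel_measurable_cnj basis_measurable[OF i])
    show "(\<lambda>x. cnj (f i x) * (\<Sum>k<N. Rinvmat \<mu> f h k j * f k (x + g))) \<in> borel_measurable \<mu>"
      by (rule measurable_basis_sum_right[OF i])
    show "AE x in \<mu>. cnj (f i x) * f j ((x + g) + h) = cnj (f i x) * (\<Sum>k<N. Rinvmat \<mu> f h k j * f k (x + g))"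
      using ae by (rule eventually_mono) simp
  qed
  also have "\<dots> = (\<Sum>k<N. Rinvmat \<mu> f h k j * Rinvmat \<mu> f g i k)"
    by (simp add: integral_basis_sum_right[OF i] Rinvmat_def)
  finally show ?thesis by (simp add: mult.commute)
qed

lemma cnj_Lmat: assumes i: "i < N" and j: "j < N"
  shows "cnj (Lmat \<mu> f g j i) = Lmat \<mu> f (- g) i j"
proof -
  define F where "F = (\<lambda>x. f j x * cnj (f i (- g + x)))"
  have Fm: "F \<in> borel_measurable \<mu>" unfolding F_def by (intro borel_measurable_times borel_measurable_cnj basis_measurable_left basis_measurable i j)
  have "cnj (Lmat \<mu> f g j i) = (LINT x|\<mu>. F x)"
    unfolding Lmat_def F_def by (subst Bochner_Integration.integral_cnj[symmetric]) (simp add: mult.commute)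
  also have "\<dots> = (LINT x|\<mu>. F (g + x))" by (rule integral_translate_left[OF Fm, symmetric])
  also have "\<dots> = Lmat \<mu> f (- g) i j"
    unfolding Lmat_def F_def by (simp add: minus_add_cancel mult.commute)
  finally show ?thesis .
qed

lemma cnj_Rinvmat: assumes i: "i < N" and j: "j < N"
  shows "cnj (Rinvmat \<mu> f g j i) = Rinvmat \<mu> f (- g) i j"
proof -
  define F where "F = (\<lambda>x. f j x * cnj (f i (x + g)))"
  have Fm: "F \<in> borel_measurable \<mu>" unfolding F_def by (intro borel_measurable_times borel_measurable_cnj basis_measurable_right basis_measurable i j)
  have "cnj (Rinvmat \<mu> f g j i) = (LINT x|\<mu>. F x)"
    unfolding Rinvmat_def F_def by (subst Bochner_Integration.integral_cnj[symmetric]) (simp add: mult.commute)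
  also have "\<dots> = (LINT x|\<mu>. F (x + - g))" by (rule integral_translate_right[OF Fm, symmetric])
  also have "\<dots> = Rinvmat \<mu> f (- g) i j"
    unfolding Rinvmat_def F_def by (simp add: mult.commute)
  finally show ?thesis .
qed

lemma Lmat_Rinvmat_commute: assumes i: "i < N" and j: "j < N"
  shows "(\<Sum>k<N. Lmat \<mu> f g i k * Rinvmat \<mu> f h k j) = (\<Sum>k<N. Rinvmat \<mu> f h i k * Lmat \<mu> f g k j)"
proof -
  have ae1: "AE x in \<mu>. f j ((- g + x) + h) = (\<Sum>k<N. Rinvmat \<mu> f h k j * f k (- g + x))"
    using AE_translate_left[OF Rinvmat_expansion[OF j, of h], of "- g"] .
  have ae2: "AE x in \<mu>. f j (- g + (x + h)) = (\<Sum>k<N. Lmat \<mu> f g k j * f k (x + h))"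
    using AE_translate_right[OF Lmat_expansion[OF j, of g], of h] .
  have m1: "(\<lambda>x. f j ((- g + x) + h)) \<in> borel_measurable \<mu>"
    using measurable_comp_translate_left[OF basis_measurable_right[OF j, of h], of "- g"] by simp
  have m2: "(\<lambda>x. f j (- g + (x + h))) \<in> borel_measurable \<mu>"
    using measurable_comp_translate_right[OF basis_measurable_left[OF j, of "- g"], of h] by simp
  have "(\<Sum>k<N. Lmat \<mu> f g i k * Rinvmat \<mu> f h k j) = (LINT x|\<mu>. cnj (f i x) * (\<Sum>k<N. Rinvmat \<mu> f h k j * f k (- g + x)))"
    by (simp add: integral_basis_sum_left[OF i] Lmat_def mult.commute)
  also have "\<dots> = (LINT x|\<mu>. cnj (f i x) * f j ((- g + x) + h))"
  proof (rule integral_cong_AE)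
    show "(\<lambda>x. cnj (f i x) * f j ((- g + x) + h)) \<in> borel_measurable \<mu>"
      by (intro borel_measurable_times borel_measurable_cnj basis_measurable[OF i] m1)
    show "(\<lambda>x. cnj (f i x) * (\<Sum>k<N. Rinvmat \<mu> f h k j * f k (- g + x))) \<in> borel_measurable \<mu>"
      by (rule measurable_basis_sum_left[OF i])
    show "AE x in \<mu>. cnj (f i x) * (\<Sum>k<N. Rinvmat \<mu> f h k j * f k (- g + x)) = cnj (f i x) * f j ((- g + x) + h)"
      using ae1 by (rule eventually_mono) simp
  qed
  also have "\<dots> = (LINT x|\<mu>. cnj (f i x) * f j (- g + (x + h)))"
    by (simp only: add.assoc)
  also have "\<dots> = (LINT x|\<mu>. cnj (f i x) * (\<Sum>k<N. Lmat \<mu> f g k j * f k (x + h)))"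
  proof (rule integral_cong_AE)
    show "(\<lambda>x. cnj (f i x) * f j (- g + (x + h))) \<in> borel_measurable \<mu>"
      by (intro borel_measurable_times borel_measurable_cnj basis_measurable[OF i] m2)
    show "(\<lambda>x. cnj (f i x) * (\<Sum>k<N. Lmat \<mu> f g k j * f k (x + h))) \<in> borel_measurable \<mu>"
      by (rule measurable_basis_sum_right[OF i])
    show "AE x in \<mu>. cnj (f i x) * f j (- g + (x + h)) = cnj (f i x) * (\<Sum>k<N. Lmat \<mu> f g k j * f k (x + h))"
      using ae2 by (rule eventually_mono) simp
  qed
  also have "\<dots> = (\<Sum>k<N. Rinvmat \<mu> f h i k * Lmat \<mu> f g k j)"
    unfolding integral_basis_sum_right[OF i] Rinvmat_def by (simp add: mult.commute)
  finally show ?thesis .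
qed

lemma measurable_haar_pair_eq: "measurable (\<mu> \<Otimes>\<^sub>M \<mu>) M = measurable borel M"
proof -
  have "measurable (\<mu> \<Otimes>\<^sub>M \<mu>) M = measurable (borel \<Otimes>\<^sub>M borel) M"
    by (rule measurable_cong_sets[OF sets_pair_measure_cong[OF sets_haar sets_haar] refl])
  then show ?thesis by (simp add: borel_prod)
qed

lemma Lmat_measurable: assumes i: "i < N" and j: "j < N"
  shows "(\<lambda>g. Lmat \<mu> f g i j) \<in> borel_measurable \<mu>"
proof -
  have fi: "f i \<in> borel_measurable borel" and fj: "f j \<in> borel_measurable borel"
    using basis_measurable[OF i] basis_measurable[OF j] by (simp_all add: measurable_haar_eq)
  have c1: "(\<lambda>z::'g \<times> 'g. snd z) \<in> borel_measurable borel"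
    by (rule borel_measurable_continuous_onI) (intro continuous_intros)
  have c2: "(\<lambda>z::'g \<times> 'g. - fst z + snd z) \<in> borel_measurable borel"
    by (rule borel_measurable_continuous_onI) (intro continuous_intros)
  have "(\<lambda>z::'g \<times> 'g. cnj (f i (snd z)) * f j (- fst z + snd z)) \<in> borel_measurable borel"
    by (intro borel_measurable_times borel_measurable_cnj measurable_compose[OF c1 fi] measurable_compose[OF c2 fj])
  then have "case_prod (\<lambda>g x. cnj (f i x) * f j (- g + x)) \<in> borel_measurable (\<mu> \<Otimes>\<^sub>M \<mu>)"
    unfolding measurable_haar_pair_eq by (simp add: case_prod_beta)
  then show ?thesis unfolding Lmat_def by (rule prob.borel_measurable_lebesgue_integral)
qed

lemma Rinvmat_measurable: assumes i: "i < N" and j: "j < N"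
  shows "(\<lambda>g. Rinvmat \<mu> f g i j) \<in> borel_measurable \<mu>"
proof -
  have fi: "f i \<in> borel_measurable borel" and fj: "f j \<in> borel_measurable borel"
    using basis_measurable[OF i] basis_measurable[OF j] by (simp_all add: measurable_haar_eq)
  have c1: "(\<lambda>z::'g \<times> 'g. snd z) \<in> borel_measurable borel"
    by (rule borel_measurable_continuous_onI) (intro continuous_intros)
  have c2: "(\<lambda>z::'g \<times> 'g. snd z + fst z) \<in> borel_measurable borel"
    by (rule borel_measurable_continuous_onI) (intro continuous_intros)
  have "(\<lambda>z::'g \<times> 'g. cnj (f i (snd z)) * f j (snd z + fst z)) \<in> borel_measurable borel"
    by (intro borel_measurable_times borel_measurable_cnj measurable_compose[OF c1 fi] measurable_compose[OF c2 fj])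
  then have "case_prod (\<lambda>g x. cnj (f i x) * f j (x + g)) \<in> borel_measurable (\<mu> \<Otimes>\<^sub>M \<mu>)"
    unfolding measurable_haar_pair_eq by (simp add: case_prod_beta)
  then show ?thesis unfolding Rinvmat_def by (rule prob.borel_measurable_lebesgue_integral)
qed

lemma norm_basis_inner_le:
  assumes i: "i < N" and j: "j < N" and Gm: "G \<in> borel_measurable \<mu>"
    and Gsq: "integrable \<mu> (\<lambda>x. (cmod (G x))\<^sup>2)" and Gi: "(LINT x|\<mu>. (cmod (G x))\<^sup>2) = (LINT x|\<mu>. (cmod (f j x))\<^sup>2)"
  shows "cmod (LINT x|\<mu>. cnj (f i x) * G x) \<le> (LINT x|\<mu>. (cmod (f i x))\<^sup>2) + (LINT x|\<mu>. (cmod (f j x))\<^sup>2)"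
proof -
  have "cmod (LINT x|\<mu>. cnj (f i x) * G x) \<le> (LINT x|\<mu>. cmod (cnj (f i x) * G x))"
    by (rule integral_norm_bound)
  also have "\<dots> \<le> (LINT x|\<mu>. (cmod (f i x))\<^sup>2 + (cmod (G x))\<^sup>2)"
  proof (rule integral_mono)
    show "integrable \<mu> (\<lambda>x. cmod (cnj (f i x) * G x))"
      by (intro integrable_norm integrable_cnj_mult basis_measurable[OF i] Gm basis_square_integrable[OF i] Gsq)
    show "integrable \<mu> (\<lambda>x. (cmod (f i x))\<^sup>2 + (cmod (G x))\<^sup>2)"
      using basis_square_integrable[OF i] Gsq by simp
    fix x show "cmod (cnj (f i x) * G x) \<le> (cmod (f i x))\<^sup>2 + (cmod (G x))\<^sup>2"
      by (simp add: norm_mult mult_le_sum_squares)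
  qed
  also have "\<dots> = (LINT x|\<mu>. (cmod (f i x))\<^sup>2) + (LINT x|\<mu>. (cmod (f j x))\<^sup>2)"
    using basis_square_integrable[OF i] Gsq Gi by simp
  finally show ?thesis .
qed

lemma norm_Lmat_le: assumes i: "i < N" and j: "j < N"
  shows "cmod (Lmat \<mu> f g i j) \<le> (LINT x|\<mu>. (cmod (f i x))\<^sup>2) + (LINT x|\<mu>. (cmod (f j x))\<^sup>2)"
  unfolding Lmat_def
  by (rule norm_basis_inner_le[OF i j basis_measurable_left[OF j] basis_square_integrable_left[OF j]]) (rule integral_translate_left[OF basis_square_measurable[OF j]])

lemma norm_Rinvmat_le: assumes i: "i < N" and j: "j < N"
  shows "cmod (Rinvmat \<mu> f g i j) \<le> (LINT x|\<mu>. (cmod (f i x))\<^sup>2) + (LINT x|\<mu>. (cmod (f j x))\<^sup>2)"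
  unfolding Rinvmat_def
  by (rule norm_basis_inner_le[OF i j basis_measurable_right[OF j] basis_square_integrable_right[OF j]]) (rule integral_translate_right[OF basis_square_measurable[OF j]])

end

definition trunc_mat :: "nat \<Rightarrow> (nat \<Rightarrow> nat \<Rightarrow> complex) \<Rightarrow> nat mat" where
  "trunc_mat N A = (\<lambda>i j. if i < N \<and> j < N then A i j else 0)"

lemma mat_mul_trunc_mat: "mat_mul {..<N} (trunc_mat N A) (trunc_mat N B) = trunc_mat N (\<lambda>i j. \<Sum>k<N. A i k * B k j)"
  by (auto simp: mat_mul_def trunc_mat_def fun_eq_iff intro!: sum.cong)

lemma trunc_mat_kdelta: "trunc_mat N kdelta = mat_id {..<N}"
  by (auto simp: trunc_mat_def mat_id_def kdelta_def fun_eq_iff)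

lemma mat_adj_trunc_mat: "mat_adj (trunc_mat N A) = trunc_mat N (\<lambda>i j. cnj (A j i))"
  by (auto simp: mat_adj_def trunc_mat_def fun_eq_iff)

lemma trunc_mat_cong: "(\<And>i j. i < N \<Longrightarrow> j < N \<Longrightarrow> A i j = B i j) \<Longrightarrow> trunc_mat N A = trunc_mat N B"
  by (auto simp: trunc_mat_def fun_eq_iff)

lemma mat_on_trunc_mat[simp]: "mat_on {..<N} (trunc_mat N A)"
  by (simp add: mat_on_def trunc_mat_def)

definition unitary_hom :: "'c set \<Rightarrow> ('g::group_add \<Rightarrow> 'c mat) \<Rightarrow> bool" where
  "unitary_hom K W \<longleftrightarrow> (\<forall>g h. mat_mul K (W g) (W h) = W (g + h)) \<and> W 0 = mat_id K \<and> (\<forall>g. mat_adj (W g) = W (- g)) \<and> (\<forall>g. mat_on K (W g))"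

lemma unitary_hom_const_id: "finite K \<Longrightarrow> unitary_hom K (\<lambda>_. mat_id K)"
  by (simp add: unitary_hom_def mat_mul_id_left)

lemma sum_kdelta_left: "i < m \<Longrightarrow> (\<Sum>l<m. kdelta i l * F l) = F i"
proof -
  assume i: "i < m"
  have "(\<Sum>l<m. kdelta i l * F l) = (\<Sum>l<m. if i = l then F l else 0)"
    by (intro sum.cong) (auto simp: kdelta_def)
  then show ?thesis using i by simp
qed

lemma sum_kdelta_right: "j < m \<Longrightarrow> (\<Sum>k<m. F k * kdelta k j) = F j"
proof -
  assume j: "j < m"
  have "(\<Sum>k<m. F k * kdelta k j) = (\<Sum>k<m. if k = j then F k else 0)"
    by (intro sum.cong) (auto simp: kdelta_def)
  then show ?thesis using j by simp
qed

lemma unitary_hom_mul: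
  assumes finite_K: "finite K" and A: "unitary_hom K A" and B: "unitary_hom K B"
    and c: "\<And>g h. mat_mul K (A g) (B h) = mat_mul K (B h) (A g)"
  shows "unitary_hom K (\<lambda>g. mat_mul K (A g) (B g))"
proof -
  have "mat_mul K (mat_mul K (A g) (B g)) (mat_mul K (A h) (B h)) = mat_mul K (A (g + h)) (B (g + h))" for g h
  proof -
    have "mat_mul K (mat_mul K (A g) (B g)) (mat_mul K (A h) (B h)) = mat_mul K (A g) (mat_mul K (mat_mul K (B g) (A h)) (B h))"
      by (simp add: mat_mul_assoc[OF finite_K])
    also have "\<dots> = mat_mul K (mat_mul K (A g) (A h)) (mat_mul K (B g) (B h))"
      by (simp add: c[symmetric] mat_mul_assoc[OF finite_K])
    also have "\<dots> = mat_mul K (A (g + h)) (B (g + h))" using A B by (simp add: unitary_hom_def)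
    finally show ?thesis .
  qed
  moreover have "mat_mul K (A 0) (B 0) = mat_id K" using A B by (simp add: unitary_hom_def mat_mul_id_left finite_K)
  moreover have "mat_adj (mat_mul K (A g) (B g)) = mat_mul K (A (- g)) (B (- g))" for g
    using A B by (simp add: unitary_hom_def mat_adj_mul c)
  ultimately show ?thesis by (simp add: unitary_hom_def)
qed

lemma mat_mul_commute_mul:
  assumes finite_K: "finite K"
    and c1: "mat_mul K A1 A2 = mat_mul K A2 A1" and c2: "mat_mul K B1 B2 = mat_mul K B2 B1"
    and c3: "mat_mul K A1 B2 = mat_mul K B2 A1" and c4: "mat_mul K B1 A2 = mat_mul K A2 B1"
  shows "mat_mul K (mat_mul K A1 B1) (mat_mul K A2 B2) = mat_mul K (mat_mul K A2 B2) (mat_mul K A1 B1)"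
proof -
  have "mat_mul K (mat_mul K A1 B1) (mat_mul K A2 B2) = mat_mul K A1 (mat_mul K (mat_mul K B1 A2) B2)" by (simp add: mat_mul_assoc[OF finite_K])
  also have "\<dots> = mat_mul K (mat_mul K A1 A2) (mat_mul K B1 B2)" by (simp add: c4 mat_mul_assoc[OF finite_K])
  also have "\<dots> = mat_mul K (mat_mul K A2 A1) (mat_mul K B2 B1)" by (simp add: c1 c2)
  also have "\<dots> = mat_mul K A2 (mat_mul K (mat_mul K A1 B2) B1)" by (simp add: mat_mul_assoc[OF finite_K])
  also have "\<dots> = mat_mul K (mat_mul K A2 B2) (mat_mul K A1 B1)" by (simp add: c3 mat_mul_assoc[OF finite_K])
  finally show ?thesis .
qed

lemma
  assumes u: "unitary_rep m U"
  shows unitary_rep_add: "\<And>g h i j. i < m \<Longrightarrow> j < m \<Longrightarrow> (\<Sum>k<m. U g i k * U h k j) = U (g + h) i j"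
    and unitary_rep_orthonormal: "\<And>g i j. i < m \<Longrightarrow> j < m \<Longrightarrow> (\<Sum>k<m. cnj (U g k i) * U g k j) = kdelta i j"
    and unitary_rep_continuous: "\<And>i j. i < m \<Longrightarrow> j < m \<Longrightarrow> continuous_on UNIV (\<lambda>g. U g i j)"
  using u by (auto simp: unitary_rep_def)

lemma unitary_rep_zero:
  assumes u: "unitary_rep m U" and i: "i < m" and j: "j < m"
  shows "U 0 i j = kdelta i j"
proof -
  have "kdelta i j = (\<Sum>k<m. cnj (U 0 k i) * U 0 k j)" using unitary_rep_orthonormal[OF u i j] by simp
  also have "\<dots> = (\<Sum>k<m. cnj (U 0 k i) * (\<Sum>l<m. U 0 k l * U 0 l j))"
    by (intro sum.cong refl) (simp add: unitary_rep_add[OF u _ j])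
  also have "\<dots> = (\<Sum>l<m. (\<Sum>k<m. cnj (U 0 k i) * U 0 k l) * U 0 l j)"
    by (simp add: sum_distrib_left sum_distrib_right mult.assoc) (rule sum.swap)
  also have "\<dots> = (\<Sum>l<m. kdelta i l * U 0 l j)"
    by (intro sum.cong refl) (simp add: unitary_rep_orthonormal[OF u i])
  also have "\<dots> = U 0 i j" using i by (rule sum_kdelta_left)
  finally show ?thesis by simp
qed

lemma cnj_unitary_rep:
  assumes u: "unitary_rep m U" and i: "i < m" and j: "j < m"
  shows "cnj (U g j i) = U (- g) i j"
proof -
  have "U (- g) i j = (\<Sum>l<m. kdelta i l * U (- g) l j)" using i by (rule sum_kdelta_left[symmetric])
  also have "\<dots> = (\<Sum>l<m. (\<Sum>k<m. cnj (U g k i) * U g k l) * U (- g) l j)"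
    by (intro sum.cong refl) (simp add: unitary_rep_orthonormal[OF u i])
  also have "\<dots> = (\<Sum>k<m. cnj (U g k i) * (\<Sum>l<m. U g k l * U (- g) l j))"
    by (simp add: sum_distrib_left sum_distrib_right mult.assoc) (rule sum.swap)
  also have "\<dots> = (\<Sum>k<m. cnj (U g k i) * kdelta k j)"
    by (intro sum.cong refl) (simp add: unitary_rep_add[OF u _ j] unitary_rep_zero[OF u _ j])
  also have "\<dots> = cnj (U g j i)" using j by (rule sum_kdelta_right)
  finally show ?thesis by simp
qed

lemma norm_unitary_rep_le_1:
  assumes u: "unitary_rep m U" and i: "i < m" and j: "j < m"
  shows "cmod (U g i j) \<le> 1"
proof -
  have "(\<Sum>k<m. cnj (U g k j) * U g k j) = 1" using unitary_rep_orthonormal[OF u j j] by (simp add: kdelta_def)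
  moreover have "(\<Sum>k<m. cnj (U g k j) * U g k j) = of_real (\<Sum>k<m. (cmod (U g k j))\<^sup>2)"
    unfolding of_real_sum by (intro sum.cong refl) (simp add: complex_norm_square[symmetric] mult.commute)
  ultimately have "(\<Sum>k<m. (cmod (U g k j))\<^sup>2) = 1" by (metis of_real_eq_1_iff)
  moreover have "(cmod (U g i j))\<^sup>2 \<le> (\<Sum>k<m. (cmod (U g k j))\<^sup>2)"
    using i by (intro member_le_sum) auto
  ultimately have "(cmod (U g i j))\<^sup>2 \<le> 1" by simp
  then show ?thesis by (simp add: power_le_one_iff abs_le_square_iff[symmetric] )
qed

lemma unitary_hom_unitary_rep:
  assumes u: "unitary_rep m U"
  shows "unitary_hom {..<m} (\<lambda>g. trunc_mat m (U g))"
proof -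
  have "mat_mul {..<m} (trunc_mat m (U g)) (trunc_mat m (U h)) = trunc_mat m (U (g + h))" for g h
    unfolding mat_mul_trunc_mat by (rule trunc_mat_cong) (simp add: unitary_rep_add[OF u])
  moreover have "trunc_mat m (U 0) = mat_id {..<m}"
    unfolding trunc_mat_kdelta[symmetric] by (rule trunc_mat_cong) (simp add: unitary_rep_zero[OF u])
  moreover have "mat_adj (trunc_mat m (U g)) = trunc_mat m (U (- g))" for g
    unfolding mat_adj_trunc_mat by (rule trunc_mat_cong) (simp add: cnj_unitary_rep[OF u])
  ultimately show ?thesis by (simp add: unitary_hom_def)
qed

definition bdd_meas :: "'g measure \<Rightarrow> ('g \<Rightarrow> complex) \<Rightarrow> bool" where
  "bdd_meas M F \<longleftrightarrow> F \<in> borel_measurable M \<and> (\<exists>B. \<forall>g. cmod (F g) \<le> B)"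

lemma bdd_meas_const[simp]: "bdd_meas M (\<lambda>_. c)"
  by (auto simp: bdd_meas_def)

lemma bdd_meas_mult: "bdd_meas M F \<Longrightarrow> bdd_meas M G \<Longrightarrow> bdd_meas M (\<lambda>g. F g * G g)"
proof -
  assume F: "bdd_meas M F" and G: "bdd_meas M G"
  then obtain B1 B2 where b1: "\<forall>g. cmod (F g) \<le> B1" and b2: "\<forall>g. cmod (G g) \<le> B2" by (auto simp: bdd_meas_def)
  have "cmod (F g * G g) \<le> B1 * B2" for g
    unfolding norm_mult by (rule mult_mono) (use b1 b2 in \<open>auto intro: order_trans[OF norm_ge_zero]\<close>)
  then show ?thesis using F G by (auto simp: bdd_meas_def)
qed

lemma bdd_meas_add: "bdd_meas M F \<Longrightarrow> bdd_meas M G \<Longrightarrow> bdd_meas M (\<lambda>g. F g + G g)"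
proof -
  assume F: "bdd_meas M F" and G: "bdd_meas M G"
  then obtain B1 B2 where b1: "\<forall>g. cmod (F g) \<le> B1" and b2: "\<forall>g. cmod (G g) \<le> B2" by (auto simp: bdd_meas_def)
  have "cmod (F g + G g) \<le> B1 + B2" for g
    by (rule order_trans[OF norm_triangle_ineq]) (use b1 b2 in \<open>auto intro: add_mono\<close>)
  then show ?thesis using F G by (auto simp: bdd_meas_def)
qed

lemma bdd_meas_sum: "(\<And>i. i \<in> I \<Longrightarrow> bdd_meas M (F i)) \<Longrightarrow> bdd_meas M (\<lambda>g. \<Sum>i\<in>I. F i g)"
  by (induction I rule: infinite_finite_induct) (auto intro: bdd_meas_add)

lemma bdd_meas_prod: "(\<And>i. i \<in> I \<Longrightarrow> bdd_meas M (F i)) \<Longrightarrow> bdd_meas M (\<lambda>g. \<Prod>i\<in>I. F i g)"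
  by (induction I rule: infinite_finite_induct) (auto intro: bdd_meas_mult)

lemma bdd_meas_if: "(b \<Longrightarrow> bdd_meas M F) \<Longrightarrow> (\<not> b \<Longrightarrow> bdd_meas M G) \<Longrightarrow> bdd_meas M (\<lambda>g. if b then F g else G g)"
  by (cases b) auto

lemma bdd_meas_mat_mul: "finite K \<Longrightarrow> (\<And>i j. bdd_meas M (\<lambda>g. A g i j)) \<Longrightarrow> (\<And>i j. bdd_meas M (\<lambda>g. B g i j)) \<Longrightarrow> bdd_meas M (\<lambda>g. mat_mul K (A g) (B g) i j)"
  unfolding mat_mul_def by (intro bdd_meas_if bdd_meas_sum bdd_meas_mult) auto

lemma bdd_meas_integrable: "prob_space M \<Longrightarrow> bdd_meas M F \<Longrightarrow> integrable M F"
  by (auto simp: bdd_meas_def intro!: finite_measure.integrable_const_bound prob_space.finite_measure)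

lemma bdd_meas_comp: "bdd_meas M F \<Longrightarrow> T \<in> measurable M M \<Longrightarrow> bdd_meas M (\<lambda>g. F (T g))"
  by (auto simp: bdd_meas_def intro: measurable_compose)

context trunc_basis begin

(* The flag says whether the edge leaves (for \<open>Lop\<close>) or enters (for \<open>Rop\<close>) the transformed
   vertex; if not, the factor is the identity. *)
definition Lop :: "bool \<Rightarrow> 'g \<Rightarrow> nat mat" where
  "Lop b g = trunc_mat N (if b then Lmat \<mu> f g else kdelta)"

definition Rop :: "bool \<Rightarrow> 'g \<Rightarrow> nat mat" where
  "Rop b g = trunc_mat N (if b then Rinvmat \<mu> f g else kdelta)"

lemma unitary_hom_Lop: "unitary_hom {..<N} (Lop b)"
proof (cases b)
  case True
  have "mat_mul {..<N} (Lop b g) (Lop b h) = Lop b (g + h)" for g h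
    unfolding Lop_def mat_mul_trunc_mat using True by (intro trunc_mat_cong) (simp add: Lmat_add)
  moreover have "Lop b 0 = mat_id {..<N}"
    unfolding Lop_def trunc_mat_kdelta[symmetric] using True by (intro trunc_mat_cong) (simp add: Lmat_zero)
  moreover have "mat_adj (Lop b g) = Lop b (- g)" for g
    unfolding Lop_def mat_adj_trunc_mat using True by (intro trunc_mat_cong) (simp add: cnj_Lmat)
  ultimately show ?thesis by (simp add: unitary_hom_def Lop_def)
next
  case False
  then have "Lop b = (\<lambda>_. mat_id {..<N})" by (intro ext) (simp add: Lop_def trunc_mat_kdelta)
  then show ?thesis using unitary_hom_const_id[of "{..<N}"] by simp
qed

lemma unitary_hom_Rop: "unitary_hom {..<N} (Rop b)"
proof (cases b)
  case True
  have "mat_mul {..<N} (Rop b g) (Rop b h) = Rop b (g + h)" for g h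
    unfolding Rop_def mat_mul_trunc_mat using True by (intro trunc_mat_cong) (simp add: Rinvmat_add)
  moreover have "Rop b 0 = mat_id {..<N}"
    unfolding Rop_def trunc_mat_kdelta[symmetric] using True by (intro trunc_mat_cong) (simp add: Rinvmat_zero)
  moreover have "mat_adj (Rop b g) = Rop b (- g)" for g
    unfolding Rop_def mat_adj_trunc_mat using True by (intro trunc_mat_cong) (simp add: cnj_Rinvmat)
  ultimately show ?thesis by (simp add: unitary_hom_def Rop_def)
next
  case False
  then have "Rop b = (\<lambda>_. mat_id {..<N})" by (intro ext) (simp add: Rop_def trunc_mat_kdelta)
  then show ?thesis using unitary_hom_const_id[of "{..<N}"] by simp
qed

lemma Lop_Rop_commute: "mat_mul {..<N} (Lop b g) (Rop b' h) = mat_mul {..<N} (Rop b' h) (Lop b g)"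
proof (cases "b \<and> b'")
  case True
  then show ?thesis unfolding Lop_def Rop_def mat_mul_trunc_mat by (intro trunc_mat_cong) (simp add: Lmat_Rinvmat_commute)
next
  case False
  then show ?thesis unfolding Lop_def Rop_def
    by (auto simp: trunc_mat_kdelta mat_mul_id_left mat_mul_id_right)
qed

lemma Lop_commute: "\<not> (b \<and> b') \<Longrightarrow> mat_mul {..<N} (Lop b g) (Lop b' h) = mat_mul {..<N} (Lop b' h) (Lop b g)"
  unfolding Lop_def by (auto simp: trunc_mat_kdelta mat_mul_id_left mat_mul_id_right)

lemma Rop_commute: "\<not> (b \<and> b') \<Longrightarrow> mat_mul {..<N} (Rop b g) (Rop b' h) = mat_mul {..<N} (Rop b' h) (Rop b g)"
  unfolding Rop_def by (auto simp: trunc_mat_kdelta mat_mul_id_left mat_mul_id_right)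

lemma bdd_meas_Lop: "bdd_meas \<mu> (\<lambda>g. Lop b g i j)"
proof (cases "i < N \<and> j < N \<and> b")
  case True
  then have "bdd_meas \<mu> (\<lambda>g. Lmat \<mu> f g i j)" unfolding bdd_meas_def using Lmat_measurable norm_Lmat_le by blast
  then show ?thesis using True by (simp add: Lop_def trunc_mat_def)
next
  case False
  then have "(\<lambda>g. Lop b g i j) = (\<lambda>g. if i < N \<and> j < N then kdelta i j else 0)"
    by (auto simp: Lop_def trunc_mat_def)
  then show ?thesis by simp
qed

lemma bdd_meas_Rop: "bdd_meas \<mu> (\<lambda>g. Rop b g i j)"
proof (cases "i < N \<and> j < N \<and> b")
  case True
  then have "bdd_meas \<mu> (\<lambda>g. Rinvmat \<mu> f g i j)" unfolding bdd_meas_def using Rinvmat_measurable norm_Rinvmat_le by blast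
  then show ?thesis using True by (simp add: Rop_def trunc_mat_def)
next
  case False
  then have "(\<lambda>g. Rop b g i j) = (\<lambda>g. if i < N \<and> j < N then kdelta i j else 0)"
    by (auto simp: Rop_def trunc_mat_def)
  then show ?thesis by simp
qed

end

section \<open>Group averages\<close>

definition mat_integral :: "'g measure \<Rightarrow> ('g \<Rightarrow> 'c mat) \<Rightarrow> 'c mat" where
  "mat_integral M F = (\<lambda>c c'. LINT g|M. F g c c')"

lemma mat_mul_integral_right:
  assumes fC: "finite C" and int: "\<And>c c'. integrable M (\<lambda>g. F g c c')"
  shows "mat_mul C K (mat_integral M F) = mat_integral M (\<lambda>g. mat_mul C K (F g))"
proof -
  { fix c c''
    have "mat_mul C K (mat_integral M F) c c'' = (LINT g|M. mat_mul C K (F g) c c'')"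
      using int by (cases "c \<in> C \<and> c'' \<in> C") (auto simp: mat_mul_def mat_integral_def integral_sum) }
  then show ?thesis by (simp add: fun_eq_iff mat_integral_def)
qed

lemma mat_mul_integral_left:
  assumes fC: "finite C" and int: "\<And>c c'. integrable M (\<lambda>g. F g c c')"
  shows "mat_mul C (mat_integral M F) K = mat_integral M (\<lambda>g. mat_mul C (F g) K)"
proof -
  { fix c c''
    have "mat_mul C (mat_integral M F) K c c'' = (LINT g|M. mat_mul C (F g) K c c'')"
      using int by (cases "c \<in> C \<and> c'' \<in> C") (auto simp: mat_mul_def mat_integral_def integral_sum)
  }
  then show ?thesis by (simp add: fun_eq_iff mat_integral_def)
qed

lemma mat_integral_const: "prob_space M \<Longrightarrow> mat_integral M (\<lambda>_. K) = K"
  by (simp add: mat_integral_def fun_eq_iff prob_space.prob_space)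

lemma mat_adj_integral: "mat_adj (mat_integral M F) = mat_integral M (\<lambda>g. mat_adj (F g))"
  by (simp add: mat_integral_def mat_adj_def fun_eq_iff)

lemma mat_on_integral: "(\<And>g. mat_on C (F g)) \<Longrightarrow> mat_on C (mat_integral M F)"
  by (simp add: mat_on_def mat_integral_def)

lemma mat_integral_cong: "(\<And>g. F g = G g) \<Longrightarrow> mat_integral M F = mat_integral M G"
  by (simp add: mat_integral_def)

context haar begin

lemma measurable_uminus_haar: "(\<lambda>x. - x) \<in> measurable \<mu> \<mu>"
  unfolding measurable_haar_haar_eq by (rule borel_measurable_continuous_onI) (intro continuous_intros)

lemma mat_integral_translate_left: assumes "\<And>c c'. (\<lambda>g. F g c c') \<in> borel_measurable \<mu>" shows "mat_integral \<mu> (\<lambda>g. F (h + g)) = mat_integral \<mu> F"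
  unfolding mat_integral_def by (intro ext integral_translate_left assms)

lemma mat_integral_translate_right: assumes "\<And>c c'. (\<lambda>g. F g c c') \<in> borel_measurable \<mu>" shows "mat_integral \<mu> (\<lambda>g. F (g + h)) = mat_integral \<mu> F"
  unfolding mat_integral_def by (intro ext integral_translate_right assms)

end

locale avg_rep = haar \<mu> for \<mu> :: "'g::{topological_group_add, t2_space, second_countable_topology} measure" +
  fixes K :: "'c set" and W :: "'g \<Rightarrow> 'c mat"
  assumes finite_K: "finite K" and unitary_W: "unitary_hom K W" and bdd_meas_W: "\<And>c c'. bdd_meas \<mu> (\<lambda>g. W g c c')"
begin

lemma W_add: "mat_mul K (W g) (W h) = W (g + h)" using unitary_W by (simp add: unitary_hom_def)
lemma mat_adj_W: "mat_adj (W g) = W (- g)" using unitary_W by (simp add: unitary_hom_def)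
lemma mat_on_W: "mat_on K (W g)" using unitary_W by (simp add: unitary_hom_def)

lemma integrable_W: "integrable \<mu> (\<lambda>g. W g c c')" using bdd_meas_W bdd_meas_integrable prob_space_haar by blast
lemma measurable_W: "(\<lambda>g. W g c c') \<in> borel_measurable \<mu>" using bdd_meas_W by (simp add: bdd_meas_def)

definition avg :: "'c mat" where "avg = mat_integral \<mu> W"

lemma mat_on_avg: "mat_on K avg" unfolding avg_def by (rule mat_on_integral[OF mat_on_W])

lemma avg_mul_W: "mat_mul K avg (W h) = avg"
proof -
  have "mat_mul K avg (W h) = mat_integral \<mu> (\<lambda>g. W (g + h))"
    unfolding avg_def by (simp add: mat_mul_integral_left[OF finite_K integrable_W] W_add)
  also have "\<dots> = avg" unfolding avg_def by (rule mat_integral_translate_right[OF measurable_W])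
  finally show ?thesis .
qed

lemma W_mul_avg: "mat_mul K (W h) avg = avg"
proof -
  have "mat_mul K (W h) avg = mat_integral \<mu> (\<lambda>g. W (h + g))"
    unfolding avg_def by (simp add: mat_mul_integral_right[OF finite_K integrable_W] W_add)
  also have "\<dots> = avg" unfolding avg_def by (rule mat_integral_translate_left[OF measurable_W])
  finally show ?thesis .
qed

lemma avg_commute: "(\<And>g. mat_mul K Y (W g) = mat_mul K (W g) Y) \<Longrightarrow> mat_mul K Y avg = mat_mul K avg Y"
  unfolding avg_def by (simp add: mat_mul_integral_right[OF finite_K integrable_W] mat_mul_integral_left[OF finite_K integrable_W])

lemma integrable_W_uminus: "integrable \<mu> (\<lambda>g. W (- g) c c')"
  using bdd_meas_integrable[OF prob_space_haar bdd_meas_comp[OF bdd_meas_W measurable_uminus_haar]] by simp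

(* The Haar measure is not assumed to be inversion invariant, so \<open>\<integral> W (- g)\<close> is identified with
   \<open>avg\<close> by showing that each of the two absorbs the other. *)
lemma mat_adj_avg: "mat_adj avg = avg"
proof -
  define avg_inv where "avg_inv = mat_integral \<mu> (\<lambda>g. W (- g))"
  have "mat_adj avg = avg_inv" unfolding avg_def avg_inv_def mat_adj_integral by (simp add: mat_adj_W)
  have W_mul_avg_inv: "mat_mul K (W h) avg_inv = avg_inv" for h
  proof -
    have "mat_mul K (W h) avg_inv = mat_integral \<mu> (\<lambda>g. W (h + - g))"
      unfolding avg_inv_def by (simp add: mat_mul_integral_right[OF finite_K integrable_W_uminus] W_add)
    also have "\<dots> = mat_integral \<mu> (\<lambda>g. W (h + - (g + h)))"
    proof (rule mat_integral_translate_right[symmetric])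
      fix c c' show "(\<lambda>g. W (h + - g) c c') \<in> borel_measurable \<mu>"
        using measurable_compose[OF measurable_compose[OF measurable_uminus_haar measurable_translate_left] measurable_W] by simp
    qed
    also have "\<dots> = avg_inv"
    proof -
      have e: "h + - (g + h) = - g" for g by (simp only: minus_add add_minus_cancel)
      show ?thesis unfolding avg_inv_def by (simp only: e)
    qed
    finally show ?thesis .
  qed
  have "mat_mul K avg avg_inv = mat_integral \<mu> (\<lambda>g. mat_mul K avg (W (- g)))"
    unfolding avg_inv_def by (simp add: mat_mul_integral_right[OF finite_K integrable_W_uminus])
  also have "\<dots> = avg" by (simp add: avg_mul_W mat_integral_const[OF prob_space_haar])
  finally have avg_absorbs: "mat_mul K avg avg_inv = avg" .
  have "mat_mul K avg avg_inv = mat_integral \<mu> (\<lambda>g. mat_mul K (W g) avg_inv)"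
    unfolding avg_def by (simp add: mat_mul_integral_left[OF finite_K integrable_W])
  also have "\<dots> = avg_inv" by (simp add: W_mul_avg_inv mat_integral_const[OF prob_space_haar])
  finally have "avg = avg_inv" using avg_absorbs by simp
  then show ?thesis using \<open>mat_adj avg = avg_inv\<close> by simp
qed

definition twirl :: "'c mat \<Rightarrow> 'c mat" where
  "twirl Y = mat_integral \<mu> (\<lambda>g. mat_mul K (mat_mul K (W g) Y) (W (- g)))"

lemma integrable_twirl_integrand: "integrable \<mu> (\<lambda>g. mat_mul K (mat_mul K (W g) Y) (W (- g)) c c')"
proof -
  have "bdd_meas \<mu> (\<lambda>g. mat_mul K (mat_mul K (W g) Y) (W (- g)) c c')"
    by (intro bdd_meas_mat_mul finite_K bdd_meas_W bdd_meas_comp[OF bdd_meas_W measurable_uminus_haar] bdd_meas_const)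
  then show ?thesis by (rule bdd_meas_integrable[OF prob_space_haar])
qed

lemma bdd_meas_twirl_integrand: "bdd_meas \<mu> (\<lambda>g. mat_mul K (mat_mul K (W g) Y) (W (- g)) c c')"
  by (intro bdd_meas_mat_mul finite_K bdd_meas_W bdd_meas_comp[OF bdd_meas_W measurable_uminus_haar] bdd_meas_const)

lemma twirl_sandwich:
  assumes ZW: "\<And>g. mat_mul K Z (W g) = Z" and WZ: "\<And>g. mat_mul K (W g) Z = Z"
  shows "mat_mul K (mat_mul K Z (twirl Y)) Z = mat_mul K (mat_mul K Z Y) Z"
proof -
  define F where "F = (\<lambda>g. mat_mul K (mat_mul K (W g) Y) (W (- g)))"
  have bF: "bdd_meas \<mu> (\<lambda>g. F g c c')" for c c' unfolding F_def by (rule bdd_meas_twirl_integrand)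
  have iZF: "integrable \<mu> (\<lambda>g. mat_mul K Z (F g) c c')" for c c'
    by (rule bdd_meas_integrable[OF prob_space_haar]) (intro bdd_meas_mat_mul finite_K bF bdd_meas_const)
  have ZW': "mat_mul K Z (mat_mul K (W g) R) = mat_mul K Z R" for g R by (simp add: ZW flip: mat_mul_assoc[OF finite_K])
  have "mat_mul K (mat_mul K Z (twirl Y)) Z = mat_mul K (mat_integral \<mu> (\<lambda>g. mat_mul K Z (F g))) Z"
    unfolding twirl_def F_def[symmetric] by (simp add: mat_mul_integral_right[OF finite_K integrable_twirl_integrand[unfolded F_def[symmetric]]] F_def)
  also have "\<dots> = mat_integral \<mu> (\<lambda>g. mat_mul K (mat_mul K Z (F g)) Z)" by (rule mat_mul_integral_left[OF finite_K iZF])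
  also have "\<dots> = mat_integral \<mu> (\<lambda>g. mat_mul K (mat_mul K Z Y) Z)"
    by (rule mat_integral_cong) (simp add: F_def mat_mul_assoc[OF finite_K] WZ ZW')
  also have "\<dots> = mat_mul K (mat_mul K Z Y) Z" by (rule mat_integral_const[OF prob_space_haar])
  finally show ?thesis .
qed

lemma W_twirl_commute: "mat_mul K (W h) (twirl Y) = mat_mul K (twirl Y) (W h)"
proof -
  define G where "G = (\<lambda>x. mat_mul K (mat_mul K (W x) Y) (W (- x + h)))"
  have Gm: "(\<lambda>g. G g c c') \<in> borel_measurable \<mu>" for c c'
  proof -
    have Tm: "(\<lambda>x. - x + h) \<in> measurable \<mu> \<mu>" using measurable_compose[OF measurable_uminus_haar measurable_translate_right] by simp
    have "bdd_meas \<mu> (\<lambda>g. G g c c')" unfolding G_def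
      by (intro bdd_meas_mat_mul finite_K bdd_meas_W bdd_meas_comp[OF bdd_meas_W Tm] bdd_meas_const)
    then show ?thesis by (simp add: bdd_meas_def)
  qed
  have "mat_mul K (W h) (twirl Y) = mat_integral \<mu> (\<lambda>g. mat_mul K (W h) (mat_mul K (mat_mul K (W g) Y) (W (- g))))"
    unfolding twirl_def by (rule mat_mul_integral_right[OF finite_K integrable_twirl_integrand])
  also have "\<dots> = mat_integral \<mu> (\<lambda>g. G (h + g))"
  proof (rule mat_integral_cong)
    fix g
    have e: "- (h + g) + h = - g" by (simp only: minus_add add.assoc left_minus add_0_right)
    show "mat_mul K (W h) (mat_mul K (mat_mul K (W g) Y) (W (- g))) = G (h + g)"
      unfolding G_def e by (simp add: W_add flip: mat_mul_assoc[OF finite_K])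
  qed
  also have "\<dots> = mat_integral \<mu> G" by (rule mat_integral_translate_left[OF Gm])
  also have "\<dots> = mat_integral \<mu> (\<lambda>g. mat_mul K (mat_mul K (mat_mul K (W g) Y) (W (- g))) (W h))"
    by (rule mat_integral_cong) (simp add: G_def mat_mul_assoc[OF finite_K] W_add)
  also have "\<dots> = mat_mul K (twirl Y) (W h)"
    unfolding twirl_def by (rule mat_mul_integral_left[OF finite_K integrable_twirl_integrand, symmetric])
  finally show ?thesis .
qed

lemma twirl_commute:
  assumes YV: "mat_mul K Y V = mat_mul K V Y" and WV: "\<And>g. mat_mul K (W g) V = mat_mul K V (W g)"
  shows "mat_mul K (twirl Y) V = mat_mul K V (twirl Y)"
proof -
  have "mat_mul K (twirl Y) V = mat_integral \<mu> (\<lambda>g. mat_mul K (mat_mul K (mat_mul K (W g) Y) (W (- g))) V)"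
    unfolding twirl_def by (rule mat_mul_integral_left[OF finite_K integrable_twirl_integrand])
  also have "\<dots> = mat_integral \<mu> (\<lambda>g. mat_mul K V (mat_mul K (mat_mul K (W g) Y) (W (- g))))"
  proof (rule mat_integral_cong)
    fix g
    have "mat_mul K (mat_mul K (mat_mul K (W g) Y) (W (- g))) V = mat_mul K (W g) (mat_mul K Y (mat_mul K (W (- g)) V))"
      by (simp only: mat_mul_assoc[OF finite_K])
    also have "\<dots> = mat_mul K (W g) (mat_mul K (mat_mul K Y V) (W (- g)))" by (simp only: WV mat_mul_assoc[OF finite_K])
    also have "\<dots> = mat_mul K (mat_mul K (W g) V) (mat_mul K Y (W (- g)))" by (simp only: YV mat_mul_assoc[OF finite_K])
    also have "\<dots> = mat_mul K V (mat_mul K (mat_mul K (W g) Y) (W (- g)))" by (simp only: WV mat_mul_assoc[OF finite_K])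
    finally show "mat_mul K (mat_mul K (mat_mul K (W g) Y) (W (- g))) V = mat_mul K V (mat_mul K (mat_mul K (W g) Y) (W (- g)))" .
  qed
  also have "\<dots> = mat_mul K V (twirl Y)"
    unfolding twirl_def by (rule mat_mul_integral_right[OF finite_K integrable_twirl_integrand, symmetric])
  finally show ?thesis .
qed

end

section \<open>Gauge projections\<close>

locale gauge = haar \<mu> for \<mu> :: "'g::{topological_group_add, t2_space, second_countable_topology} measure" +
  fixes Vs :: "'v list" and E :: "'e set" and src tgt :: "'e \<Rightarrow> 'v" and d :: "'v \<Rightarrow> nat" and n :: "'e \<Rightarrow> nat"
    and U :: "'v \<Rightarrow> 'g \<Rightarrow> nat \<Rightarrow> nat \<Rightarrow> complex" and \<phi> :: "'e \<Rightarrow> nat \<Rightarrow> 'g \<Rightarrow> complex"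
  assumes finE: "finite E"
    and urep: "\<forall>v\<in>set Vs. unitary_rep (d v) (U v)" and l2: "\<forall>e\<in>E. L2_trunc_basis \<mu> (n e) (\<phi> e)"
begin

abbreviation S where "S \<equiv> sites (set Vs) E"
abbreviation D where "D \<equiv> site_dim d n"

lemma finite_sites: "finite S" using finE by (simp add: sites_def)

lemma trunc_basis_edge: "e \<in> E \<Longrightarrow> trunc_basis \<mu> (n e) (\<phi> e)"
  by (rule trunc_basis.intro[OF haar_axioms]) (simp add: trunc_basis_axioms_def l2)

definition site_op :: "'v \<Rightarrow> 'g \<Rightarrow> ('v + 'e) \<Rightarrow> nat mat" where
  "site_op v g x = (case x of Inl w \<Rightarrow> (if w = v then trunc_mat (d w) (U v g) else mat_id {..<d w})
     | Inr e \<Rightarrow> mat_mul {..<n e} (trunc_basis.Lop \<mu> (n e) (\<phi> e) (src e = v) g) (trunc_basis.Rop \<mu> (n e) (\<phi> e) (tgt e = v) g))"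

lemma site_dim_simps[simp]: "D (Inl w) = d w" "D (Inr e) = n e"
  by (simp_all add: site_dim_def)

lemma unitary_hom_site_op: assumes x: "x \<in> S" and v: "v \<in> set Vs" shows "unitary_hom {..<D x} (\<lambda>g. site_op v g x)"
proof (cases x)
  case (Inl w)
  show ?thesis
  proof (cases "w = v")
    case True
    have "unitary_rep (d v) (U v)" using urep v by simp
    then show ?thesis using unitary_hom_unitary_rep[of "d v" "U v"] Inl True by (simp add: site_op_def)
  next
    case False then show ?thesis using Inl unitary_hom_const_id[of "{..<d w}"] by (simp add: site_op_def)
  qed
next
  case (Inr e)
  then have e: "e \<in> E" using x by (auto simp: sites_def)
  interpret L: trunc_basis \<mu> "n e" "\<phi> e" by (rule trunc_basis_edge[OF e])
  show ?thesis using Inr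
    by (simp add: site_op_def) (intro unitary_hom_mul L.unitary_hom_Lop L.unitary_hom_Rop L.Lop_Rop_commute, simp)
qed

lemma site_op_commute: assumes x: "x \<in> S" and vw: "v \<noteq> w"
  shows "mat_mul {..<D x} (site_op v g x) (site_op w h x) = mat_mul {..<D x} (site_op w h x) (site_op v g x)"
proof (cases x)
  case (Inl u)
  then show ?thesis using vw by (auto simp: site_op_def mat_mul_id_left mat_mul_id_right)
next
  case (Inr e)
  then have e: "e \<in> E" using x by (auto simp: sites_def)
  interpret L: trunc_basis \<mu> "n e" "\<phi> e" by (rule trunc_basis_edge[OF e])
  show ?thesis using Inr vw
    by (simp add: site_op_def) (rule mat_mul_commute_mul, auto intro: L.Lop_commute L.Rop_commute L.Lop_Rop_commute L.Lop_Rop_commute[symmetric])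
qed

lemma bdd_meas_site_op: assumes x: "x \<in> S" and v: "v \<in> set Vs" shows "bdd_meas \<mu> (\<lambda>g. site_op v g x i j)"
proof (cases x)
  case (Inl w)
  show ?thesis
  proof (cases "w = v \<and> i < d w \<and> j < d w")
    case True
    have u: "unitary_rep (d v) (U v)" using urep v by simp
    have "bdd_meas \<mu> (\<lambda>g. U v g i j)" unfolding bdd_meas_def
      using True u norm_unitary_rep_le_1[OF u] continuous_imp_measurable_haar[OF unitary_rep_continuous[OF u]] by auto
    moreover have "w = v" "i < d v" "j < d v" using True by auto
    ultimately show ?thesis using Inl by (simp add: site_op_def trunc_mat_def)
  next
    case False
    then have "(\<lambda>g. site_op v g x i j) = (\<lambda>g. mat_id {..<d w} i j)" using Inl by (auto simp: site_op_def trunc_mat_def mat_id_def)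
    then show ?thesis by simp
  qed
next
  case (Inr e)
  then have e: "e \<in> E" using x by (auto simp: sites_def)
  interpret L: trunc_basis \<mu> "n e" "\<phi> e" by (rule trunc_basis_edge[OF e])
  show ?thesis using Inr by (simp add: site_op_def) (intro bdd_meas_mat_mul L.bdd_meas_Lop L.bdd_meas_Rop, simp_all)
qed

lemma gauge_op_eq_tensor: "gauge_op (set Vs) E src tgt d n \<mu> U \<phi> v g = tensor S D (\<lambda>x. site_op v g x)"
  unfolding gauge_op_def
proof (rule tensor_cong)
  fix x i j assume x: "x \<in> S" and ij: "i < D x" "j < D x"
  show "(case x of Inl w \<Rightarrow> if w = v then U v g i j else kdelta i j
      | Inr e \<Rightarrow> \<Sum>k<n e. (if src e = v then Lmat \<mu> (\<phi> e) g i k else kdelta i k) *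
                          (if tgt e = v then Rinvmat \<mu> (\<phi> e) g k j else kdelta k j)) = site_op v g x i j"
  proof (cases x)
    case (Inl w) then show ?thesis using ij by (auto simp: site_op_def trunc_mat_def mat_id_def kdelta_def)
  next
    case (Inr e)
    then have e: "e \<in> E" using x by (auto simp: sites_def)
    interpret L: trunc_basis \<mu> "n e" "\<phi> e" by (rule trunc_basis_edge[OF e])
    show ?thesis using Inr ij by (simp add: site_op_def L.Lop_def L.Rop_def mat_mul_trunc_mat) (simp add: trunc_mat_def)
  qed
qed

definition gauge_on :: "('v + 'e) set \<Rightarrow> 'v \<Rightarrow> 'g \<Rightarrow> ('v + 'e) cfg mat" where
  "gauge_on T v g = tensor T D (\<lambda>x. site_op v g x)"

lemma unitary_hom_gauge_on: assumes T: "T \<subseteq> S" and v: "v \<in> set Vs" shows "unitary_hom (confs T D) (gauge_on T v)"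
proof -
  have fT: "finite T" using finite_sites T by (rule finite_subset[rotated])
  have G: "unitary_hom {..<D x} (\<lambda>g. site_op v g x)" if "x \<in> T" for x using unitary_hom_site_op that T v by auto
  have "mat_mul (confs T D) (gauge_on T v g) (gauge_on T v h) = gauge_on T v (g + h)" for g h
    unfolding gauge_on_def tensor_mul[OF fT]
  proof (rule tensor_cong)
    fix x i j assume x: "x \<in> T" and ij: "i < D x" "j < D x"
    have "(\<Sum>k<D x. site_op v g x i k * site_op v h x k j) = mat_mul {..<D x} (site_op v g x) (site_op v h x) i j"
      using ij by (simp add: mat_mul_def)
    also have "\<dots> = site_op v (g + h) x i j" using G[OF x] by (simp add: unitary_hom_def)
    finally show "(\<Sum>k<D x. site_op v g x i k * site_op v h x k j) = site_op v (g + h) x i j" .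
  qed
  moreover have "gauge_on T v 0 = mat_id (confs T D)"
  proof -
    have "gauge_on T v 0 = tensor T D (\<lambda>_. kdelta)"
      unfolding gauge_on_def by (rule tensor_cong) (use G in \<open>auto simp: unitary_hom_def mat_id_def kdelta_def\<close>)
    then show ?thesis by (simp add: tensor_kdelta[OF fT])
  qed
  moreover have "mat_adj (gauge_on T v g) = gauge_on T v (- g)" for g
    unfolding gauge_on_def mat_adj_tensor
  proof (rule tensor_cong)
    fix x i j assume x: "x \<in> T" and ij: "i < D x" "j < D x"
    have "cnj (site_op v g x j i) = mat_adj (site_op v g x) i j" by (simp add: mat_adj_def)
    also have "\<dots> = site_op v (- g) x i j" using G[OF x] by (simp add: unitary_hom_def)
    finally show "cnj (site_op v g x j i) = site_op v (- g) x i j" .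
  qed
  ultimately show ?thesis by (simp add: unitary_hom_def gauge_on_def)
qed

lemma gauge_on_commute: assumes T: "T \<subseteq> S" and vw: "v \<noteq> w"
  shows "mat_mul (confs T D) (gauge_on T v g) (gauge_on T w h) = mat_mul (confs T D) (gauge_on T w h) (gauge_on T v g)"
proof -
  have fT: "finite T" using finite_sites T by (rule finite_subset[rotated])
  show ?thesis unfolding gauge_on_def tensor_mul[OF fT]
  proof (rule tensor_cong)
    fix x i j assume x: "x \<in> T" and ij: "i < D x" "j < D x"
    have "(\<Sum>k<D x. site_op v g x i k * site_op w h x k j) = mat_mul {..<D x} (site_op v g x) (site_op w h x) i j"
      using ij by (simp add: mat_mul_def)
    also have "\<dots> = mat_mul {..<D x} (site_op w h x) (site_op v g x) i j" using site_op_commute[OF _ vw] x T by auto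
    also have "\<dots> = (\<Sum>k<D x. site_op w h x i k * site_op v g x k j)" using ij by (simp add: mat_mul_def)
    finally show "(\<Sum>k<D x. site_op v g x i k * site_op w h x k j) = (\<Sum>k<D x. site_op w h x i k * site_op v g x k j)" .
  qed
qed

lemma bdd_meas_gauge_on: assumes T: "T \<subseteq> S" and v: "v \<in> set Vs" shows "bdd_meas \<mu> (\<lambda>g. gauge_on T v g c c')"
  unfolding gauge_on_def tensor_def using T v by (intro bdd_meas_if bdd_meas_prod bdd_meas_site_op) auto

end

context gauge begin

abbreviation Conf where "Conf \<equiv> confs S D"

abbreviation mul :: "('v + 'e) cfg mat \<Rightarrow> ('v + 'e) cfg mat \<Rightarrow> ('v + 'e) cfg mat" (infixl "\<odot>" 70)
  where "A \<odot> B \<equiv> mat_mul Conf A B"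

lemma finite_Conf: "finite Conf" using finite_sites by (simp add: confs_def finite_PiE)

lemma avg_rep_vertex: "v \<in> set Vs \<Longrightarrow> avg_rep \<mu> Conf (gauge_on S v)"
  by (rule avg_rep.intro[OF haar_axioms]) (simp add: avg_rep_axioms_def finite_Conf unitary_hom_gauge_on bdd_meas_gauge_on)

definition vproj :: "'v \<Rightarrow> ('v + 'e) cfg mat" where "vproj v = mat_integral \<mu> (gauge_on S v)"

lemma gauge_proj_eq_vproj: "gauge_proj (set Vs) E src tgt d n \<mu> U \<phi> = vproj"
  by (simp add: fun_eq_iff gauge_proj_def vproj_def mat_integral_def gauge_op_eq_tensor gauge_on_def)

lemma mat_on_vproj: "v \<in> set Vs \<Longrightarrow> mat_on Conf (vproj v)"
proof -
  assume v: "v \<in> set Vs"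
  interpret G: avg_rep \<mu> Conf "gauge_on S v" by (rule avg_rep_vertex[OF v])
  show ?thesis using G.mat_on_avg by (simp add: G.avg_def vproj_def)
qed

lemma
  assumes v: "v \<in> set Vs"
  shows vproj_mul_gauge_on: "vproj v \<odot> gauge_on S v h = vproj v"
    and gauge_on_mul_vproj: "gauge_on S v h \<odot> vproj v = vproj v"
    and mat_adj_vproj: "mat_adj (vproj v) = vproj v"
proof -
  interpret G: avg_rep \<mu> Conf "gauge_on S v" by (rule avg_rep_vertex[OF v])
  show "vproj v \<odot> gauge_on S v h = vproj v" "gauge_on S v h \<odot> vproj v = vproj v"
    "mat_adj (vproj v) = vproj v"
    using G.avg_mul_W G.W_mul_avg G.mat_adj_avg by (simp_all add: G.avg_def vproj_def)
qed

lemma vproj_commute: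
  assumes v: "v \<in> set Vs" and c: "\<And>g. Y \<odot> gauge_on S v g = gauge_on S v g \<odot> Y"
  shows "Y \<odot> vproj v = vproj v \<odot> Y"
proof -
  interpret G: avg_rep \<mu> Conf "gauge_on S v" by (rule avg_rep_vertex[OF v])
  show ?thesis using G.avg_commute[OF c] by (simp add: G.avg_def vproj_def)
qed

lemma gauge_on_vproj_commute: "v \<in> set Vs \<Longrightarrow> w \<noteq> v \<Longrightarrow> gauge_on S w h \<odot> vproj v = vproj v \<odot> gauge_on S w h"
  by (rule vproj_commute) (auto simp: gauge_on_commute)

lemma vproj_vproj_commute: "v \<in> set Vs \<Longrightarrow> w \<in> set Vs \<Longrightarrow> vproj w \<odot> vproj v = vproj v \<odot> vproj w"
proof (cases "v = w")
  case False
  assume v: "v \<in> set Vs" and w: "w \<in> set Vs"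
  show ?thesis
  proof (rule vproj_commute[OF v])
    fix g show "vproj w \<odot> gauge_on S v g = gauge_on S v g \<odot> vproj w"
      using gauge_on_vproj_commute[OF w, of v g] False by simp
  qed
qed simp

definition vproj_prod :: "'v list \<Rightarrow> ('v + 'e) cfg mat" where
  "vproj_prod ws = foldr (mat_mul Conf) (map vproj ws) (mat_id Conf)"

lemma vproj_prod_simps: "vproj_prod [] = mat_id Conf" "vproj_prod (u # us) = vproj u \<odot> vproj_prod us"
  by (simp_all add: vproj_prod_def)

lemma mat_on_vproj_prod: "mat_on Conf (vproj_prod ws)"
  by (cases ws) (simp_all add: vproj_prod_simps)

lemma vproj_prod_commute:
  assumes Y_on: "mat_on Conf Y" and c: "\<And>v. v \<in> set ws \<Longrightarrow> Y \<odot> vproj v = vproj v \<odot> Y"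
  shows "Y \<odot> vproj_prod ws = vproj_prod ws \<odot> Y"
  using c
proof (induction ws)
  case Nil then show ?case using Y_on by (simp add: vproj_prod_simps mat_mul_id_left mat_mul_id_right finite_Conf)
next
  case (Cons u us)
  have "Y \<odot> vproj_prod (u # us) = vproj u \<odot> (Y \<odot> vproj_prod us)"
    using Cons.prems by (simp add: vproj_prod_simps mat_mul_assoc[OF finite_Conf] flip: mat_mul_assoc[OF finite_Conf])
  also have "\<dots> = vproj_prod (u # us) \<odot> Y" using Cons by (simp add: vproj_prod_simps mat_mul_assoc[OF finite_Conf])
  finally show ?case .
qed

lemma gauge_on_mul_vproj_prod:
  assumes "set ws \<subseteq> set Vs" and "v \<in> set ws"
  shows "gauge_on S v h \<odot> vproj_prod ws = vproj_prod ws"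
  using assms
proof (induction ws)
  case (Cons u us)
  have u: "u \<in> set Vs" using Cons.prems by auto
  show ?case
  proof (cases "u = v")
    case True
    then show ?thesis using gauge_on_mul_vproj[OF u] by (simp add: vproj_prod_simps flip: mat_mul_assoc[OF finite_Conf])
  next
    case False
    then have vus: "v \<in> set us" using Cons.prems by auto
    have "gauge_on S v h \<odot> vproj_prod (u # us) = vproj u \<odot> (gauge_on S v h \<odot> vproj_prod us)"
      using gauge_on_vproj_commute[OF u, of v h] False by (simp add: vproj_prod_simps flip: mat_mul_assoc[OF finite_Conf])
    then show ?thesis using Cons.IH[OF _ vus] Cons.prems by (simp add: vproj_prod_simps)
  qed
qed simp

lemma vproj_prod_mul_gauge_on:
  assumes "set ws \<subseteq> set Vs" and "v \<in> set ws"
  shows "vproj_prod ws \<odot> gauge_on S v h = vproj_prod ws"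
  using assms
proof (induction ws)
  case (Cons u us)
  have u: "u \<in> set Vs" using Cons.prems by auto
  show ?case
  proof (cases "v \<in> set us")
    case True
    then show ?thesis using Cons.IH[OF _ True] Cons.prems by (simp add: vproj_prod_simps mat_mul_assoc[OF finite_Conf])
  next
    case False
    then have uv: "u = v" using Cons.prems by auto
    have c: "gauge_on S v h \<odot> vproj_prod us = vproj_prod us \<odot> gauge_on S v h"
    proof (rule vproj_prod_commute)
      show "mat_on Conf (gauge_on S v h)" by (simp add: gauge_on_def)
      fix w assume "w \<in> set us"
      then have "w \<noteq> v" "w \<in> set Vs" using False Cons.prems by auto
      then show "gauge_on S v h \<odot> vproj w = vproj w \<odot> gauge_on S v h" using gauge_on_vproj_commute by auto
    qed
    have "vproj_prod (u # us) \<odot> gauge_on S v h = vproj v \<odot> (vproj_prod us \<odot> gauge_on S v h)"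
      using uv by (simp add: vproj_prod_simps mat_mul_assoc[OF finite_Conf])
    also have "\<dots> = vproj v \<odot> gauge_on S v h \<odot> vproj_prod us" by (simp add: c mat_mul_assoc[OF finite_Conf])
    also have "\<dots> = vproj_prod (u # us)" using vproj_mul_gauge_on[OF u] uv by (simp add: vproj_prod_simps)
    finally show ?thesis .
  qed
qed simp

lemma vproj_prod_mul_vproj:
  assumes ws: "set ws \<subseteq> set Vs" and v: "v \<in> set ws"
  shows "vproj_prod ws \<odot> vproj v = vproj_prod ws"
proof -
  have vV: "v \<in> set Vs" using ws v by auto
  interpret G: avg_rep \<mu> Conf "gauge_on S v" by (rule avg_rep_vertex[OF vV])
  have "vproj_prod ws \<odot> vproj v = mat_integral \<mu> (\<lambda>g. vproj_prod ws \<odot> gauge_on S v g)"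
    unfolding vproj_def by (rule mat_mul_integral_right[OF finite_Conf G.integrable_W])
  also have "\<dots> = vproj_prod ws" using vproj_prod_mul_gauge_on[OF ws v] mat_integral_const[OF prob_space_haar] by simp
  finally show ?thesis .
qed

lemma vproj_prod_idem:
  assumes ws: "set ws \<subseteq> set Vs"
  shows "vproj_prod Vs \<odot> vproj_prod ws = vproj_prod Vs"
  using ws
proof (induction ws)
  case Nil then show ?case by (simp add: vproj_prod_simps mat_mul_id_right mat_on_vproj_prod finite_Conf)
next
  case (Cons u us)
  have "vproj_prod Vs \<odot> vproj_prod (u # us) = vproj_prod Vs \<odot> vproj u \<odot> vproj_prod us"
    by (simp add: vproj_prod_simps mat_mul_assoc[OF finite_Conf])
  also have "\<dots> = vproj_prod Vs" using Cons vproj_prod_mul_vproj[of Vs u] by simp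
  finally show ?case .
qed

lemma mat_adj_vproj_prod:
  assumes ws: "set ws \<subseteq> set Vs"
  shows "mat_adj (vproj_prod ws) = vproj_prod ws"
  using ws
proof (induction ws)
  case Nil then show ?case by (simp add: vproj_prod_simps)
next
  case (Cons u us)
  have u: "u \<in> set Vs" using Cons.prems by auto
  have "mat_adj (vproj_prod (u # us)) = vproj_prod us \<odot> vproj u"
    using Cons mat_adj_vproj[OF u] by (simp add: vproj_prod_simps mat_adj_mul)
  also have "\<dots> = vproj u \<odot> vproj_prod us"
  proof -
    have "vproj u \<odot> vproj_prod us = vproj_prod us \<odot> vproj u"
    proof (rule vproj_prod_commute)
      show "mat_on Conf (vproj u)" by (rule mat_on_vproj[OF u])
      fix w assume "w \<in> set us"
      then show "vproj u \<odot> vproj w = vproj w \<odot> vproj u" using vproj_vproj_commute Cons.prems u by auto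
    qed
    then show ?thesis by simp
  qed
  finally show ?case by (simp add: vproj_prod_simps)
qed

lemma PiGI_eq_vproj_prod: "PiGI Vs E src tgt d n \<mu> U \<phi> = vproj_prod Vs"
  by (simp add: PiGI_def vproj_prod_def opmul_eq_mat_mul gauge_proj_eq_vproj opid_def tensor_kdelta[OF finite_sites])

end

section \<open>Haag duality\<close>

context index_product begin

lemma mat_integral_kron_left: "mat_integral M (\<lambda>g. kron (F g) V) = kron (mat_integral M F) V"
  by (auto simp: mat_integral_def kron_def fun_eq_iff)

lemma kron_conj_lift1:
  assumes "unitary_hom C2 W2"
  shows "kron (W1 g) (W2 g) \<odot> lift1 M \<odot> kron (W1 (- g)) (W2 (- g))
       = lift1 (mat_mul C1 (mat_mul C1 (W1 g) M) (W1 (- g)))"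
proof -
  have "mat_mul C2 (mat_mul C2 (W2 g) (mat_id C2)) (W2 (- g)) = mat_id C2"
    using assms by (simp add: unitary_hom_def mat_mul_id_right finite_C2)
  then show ?thesis
    unfolding lift1_def mat_mul_kron by simp
qed

lemma lift2_ptrace1_commute_kron:
  assumes W1: "unitary_hom C1 W1" and W2: "unitary_hom C2 W2"
    and Y: "kron (W1 g) (W2 g) \<odot> Y \<odot> kron (W1 (- g)) (W2 (- g)) = Y"
  shows "lift2 (ptrace1 Y) \<odot> kron (W1 g) (W2 g) = kron (W1 g) (W2 g) \<odot> lift2 (ptrace1 Y)"
proof -
  note assoc2 = mat_mul_assoc[OF finite_C2]
  have inv: "(\<Sum>a''\<in>C1. W1 (- g) a a'' * W1 g a'' a') = mat_id C1 a a'"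
    if "a \<in> C1" "a' \<in> C1" for a a'
  proof -
    have "mat_mul C1 (W1 (- g)) (W1 g) a a' = mat_id C1 a a'"
      using W1 by (simp add: unitary_hom_def)
    then show ?thesis using that by (simp add: mat_mul_def)
  qed
  have "ptrace1 Y = ptrace1 (kron (W1 g) (W2 g) \<odot> Y \<odot> kron (W1 (- g)) (W2 (- g)))"
    by (simp only: Y)
  also have "\<dots> = mat_mul C2 (mat_mul C2 (W2 g) (ptrace1 Y)) (W2 (- g))"
    by (rule ptrace1_conj[OF inv])
  finally have R: "ptrace1 Y = mat_mul C2 (mat_mul C2 (W2 g) (ptrace1 Y)) (W2 (- g))" .
  have "mat_mul C2 (ptrace1 Y) (W2 g)
      = mat_mul C2 (mat_mul C2 (W2 g) (ptrace1 Y)) (mat_mul C2 (W2 (- g)) (W2 g))"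
    by (subst R) (simp add: assoc2)
  also have "\<dots> = mat_mul C2 (W2 g) (ptrace1 Y)"
    using W2 by (simp add: unitary_hom_def mat_mul_id_right[OF mat_on_mul finite_C2])
  finally have RW: "mat_mul C2 (ptrace1 Y) (W2 g) = mat_mul C2 (W2 g) (ptrace1 Y)" .
  show ?thesis
    unfolding lift2_def mat_mul_kron
    by (rule kron_cong) (simp_all add: mat_mul_id_left_apply mat_mul_id_right_apply finite_C1 RW)
qed

end

locale gauge_region = gauge \<mu> Vs E src tgt d n U \<phi>
  for \<mu> :: "'g::{topological_group_add, t2_space, second_countable_topology} measure"
  and Vs :: "'v list" and E :: "'e set" and src tgt d n U \<phi> +
  fixes r :: "('v + 'e) set"
  assumes rS: "r \<subseteq> sites (set Vs) E"
begin

sublocale B: index_product Conf "confs r D" "confs (S - r) D" "\<lambda>c. restrict c r" "\<lambda>c. restrict c (S - r)" "merge_conf r"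
  by (rule index_product_confs[OF finite_sites rS])

lemma gauge_on_split: "gauge_on S v g = B.kron (gauge_on r v g) (gauge_on (S - r) v g)"
  unfolding gauge_on_def by (rule tensor_split[OF finite_sites rS])

lemma unitary_hom_gauge_on_region: "v \<in> set Vs \<Longrightarrow> unitary_hom (confs r D) (gauge_on r v)" using unitary_hom_gauge_on rS by blast
lemma unitary_hom_gauge_on_complement: "v \<in> set Vs \<Longrightarrow> unitary_hom (confs (S - r) D) (gauge_on (S - r) v)" using unitary_hom_gauge_on by blast

abbreviation P where "P \<equiv> vproj_prod Vs"

lemma mat_on_P: "mat_on Conf P"
  by (rule mat_on_vproj_prod)

lemma P_idem: "P \<odot> P = P"
  using vproj_prod_idem[of Vs] by simp

lemma mat_adj_P: "mat_adj P = P"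
  using mat_adj_vproj_prod[of Vs] by simp

lemma gauge_on_conj_P: "v \<in> set Vs \<Longrightarrow> gauge_on S v g \<odot> P \<odot> gauge_on S v (- g) = P"
  using gauge_on_mul_vproj_prod[of Vs v] vproj_prod_mul_gauge_on[of Vs v] by simp

lemma lift2_ptrace_commute: "B.lift2 (B.ptrace1 P) \<odot> P = P \<odot> B.lift2 (B.ptrace1 P)"
proof (rule vproj_prod_commute)
  fix v assume v: "v \<in> set Vs"
  show "B.lift2 (B.ptrace1 P) \<odot> vproj v = vproj v \<odot> B.lift2 (B.ptrace1 P)"
  proof (rule vproj_commute[OF v])
    fix g
    show "B.lift2 (B.ptrace1 P) \<odot> gauge_on S v g = gauge_on S v g \<odot> B.lift2 (B.ptrace1 P)"
      unfolding gauge_on_split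
      by (rule B.lift2_ptrace1_commute_kron[OF unitary_hom_gauge_on_region[OF v] unitary_hom_gauge_on_complement[OF v]])
         (use gauge_on_conj_P[OF v, of g] in \<open>simp add: gauge_on_split\<close>)
  qed
qed simp

lemma twirl_lift1:
  assumes v: "v \<in> set Vs"
  shows "avg_rep.twirl \<mu> Conf (gauge_on S v) (B.lift1 M)
    = B.lift1 (mat_integral \<mu> (\<lambda>g. mat_mul (confs r D) (mat_mul (confs r D) (gauge_on r v g) M) (gauge_on r v (- g))))"
  unfolding avg_rep.twirl_def[OF avg_rep_vertex[OF v]] gauge_on_split
    B.kron_conj_lift1[OF unitary_hom_gauge_on_complement[OF v]]
  by (simp add: B.lift1_def B.mat_integral_kron_left)

definition twirl_list :: "'v list \<Rightarrow> ('v + 'e) cfg mat \<Rightarrow> ('v + 'e) cfg mat" where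
  "twirl_list ws Y = foldr (\<lambda>v. avg_rep.twirl \<mu> Conf (gauge_on S v)) ws Y"

lemma twirl_list_simps: "twirl_list [] Y = Y" "twirl_list (u # us) Y = avg_rep.twirl \<mu> Conf (gauge_on S u) (twirl_list us Y)"
  by (simp_all add: twirl_list_def)

lemma twirl_list_lift1: "set ws \<subseteq> set Vs \<Longrightarrow> \<exists>M'. twirl_list ws (B.lift1 M) = B.lift1 M'"
proof (induction ws)
  case Nil then show ?case by (auto simp: twirl_list_simps)
next
  case (Cons u us)
  have "set us \<subseteq> set Vs" using Cons.prems by simp
  then obtain M1 where h1: "twirl_list us (B.lift1 M) = B.lift1 M1" using Cons.IH by blast
  have u: "u \<in> set Vs" using Cons.prems by simp
  have "twirl_list (u # us) (B.lift1 M) = B.lift1 (mat_integral \<mu> (\<lambda>g. mat_mul (confs r D) (mat_mul (confs r D) (gauge_on r u g) M1) (gauge_on r u (- g))))"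
    unfolding twirl_list_simps h1 by (rule twirl_lift1[OF u])
  then show ?case by blast
qed

lemma twirl_list_sandwich: "set ws \<subseteq> set Vs \<Longrightarrow> P \<odot> twirl_list ws Y \<odot> P = P \<odot> Y \<odot> P"
proof (induction ws)
  case Nil then show ?case by (simp add: twirl_list_simps)
next
  case (Cons u us)
  have u: "u \<in> set Vs" using Cons.prems by auto
  interpret G: avg_rep \<mu> Conf "gauge_on S u" by (rule avg_rep_vertex[OF u])
  have "P \<odot> twirl_list (u # us) Y \<odot> P = P \<odot> twirl_list us Y \<odot> P"
    unfolding twirl_list_simps by (rule G.twirl_sandwich) (use gauge_on_mul_vproj_prod[of Vs u] vproj_prod_mul_gauge_on[of Vs u] u in auto)
  then show ?case using Cons by simp
qed

lemma twirl_list_commute: "set ws \<subseteq> set Vs \<Longrightarrow> v \<in> set ws \<Longrightarrow> twirl_list ws Y \<odot> gauge_on S v h = gauge_on S v h \<odot> twirl_list ws Y"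
proof (induction ws)
  case Nil then show ?case by simp
next
  case (Cons u us)
  have u: "u \<in> set Vs" using Cons.prems by auto
  interpret G: avg_rep \<mu> Conf "gauge_on S u" by (rule avg_rep_vertex[OF u])
  show ?case
  proof (cases "v = u")
    case True
    then show ?thesis using G.W_twirl_commute[of h "twirl_list us Y"] by (simp add: twirl_list_simps)
  next
    case False
    then have vus: "v \<in> set us" using Cons.prems by auto
    show ?thesis unfolding twirl_list_simps
      by (rule G.twirl_commute) (use Cons.IH[OF _ vus] Cons.prems False gauge_on_commute in auto)
  qed
qed

lemma commuting_lift1_representative:
  "\<exists>M'. B.lift1 M' \<odot> P = P \<odot> B.lift1 M' \<and> P \<odot> B.lift1 M \<odot> P = P \<odot> B.lift1 M' \<odot> P"
proof -
  obtain M' where M': "twirl_list Vs (B.lift1 M) = B.lift1 M'" using twirl_list_lift1[of Vs M] by auto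
  have "B.lift1 M' \<odot> P = P \<odot> B.lift1 M'"
  proof (rule vproj_prod_commute)
    fix v assume v: "v \<in> set Vs"
    show "B.lift1 M' \<odot> vproj v = vproj v \<odot> B.lift1 M'"
      by (rule vproj_commute[OF v]) (use twirl_list_commute[of Vs v "B.lift1 M"] M' v in auto)
  qed simp
  moreover have "P \<odot> B.lift1 M \<odot> P = P \<odot> B.lift1 M' \<odot> P"
    using twirl_list_sandwich[of Vs "B.lift1 M"] M' by simp
  ultimately show ?thesis by blast
qed

lemma local_alg_region: "local_alg S D r = range B.lift1"
proof -
  have "B.lift1 Bm = (\<lambda>c c'. if c \<in> Conf \<and> c' \<in> Conf
       then Bm (restrict c r) (restrict c' r) * (if restrict c (S - r) = restrict c' (S - r) then 1 else 0) else 0)" for Bm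
    by (auto simp: B.lift1_def B.kron_def mat_id_def fun_eq_iff B.p2_in)
  then show ?thesis by (auto simp: local_alg_def)
qed

lemma local_alg_complement: "local_alg S D (S - r) = range B.lift2"
proof -
  have Sr: "S - (S - r) = r" using rS by auto
  have "B.lift2 Bm = (\<lambda>c c'. if c \<in> Conf \<and> c' \<in> Conf
       then Bm (restrict c (S - r)) (restrict c' (S - r)) * (if restrict c (S - (S - r)) = restrict c' (S - (S - r)) then 1 else 0) else 0)" for Bm
    unfolding Sr by (auto simp: B.lift2_def B.kron_def mat_id_def fun_eq_iff B.p1_in)
  then show ?thesis by (auto simp: local_alg_def)
qed

lemma full_alg_eq: "full_alg S D = {X. mat_on Conf X}"
  by (simp add: full_alg_def mat_on_def)

lemma compress_eq: "compress S D Q A = (\<lambda>X. Q \<odot> X \<odot> Q) ` A"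
  by (simp add: compress_def opmul_eq_mat_mul)

lemma compressed_commutant_subset:
  assumes "X \<in> (\<lambda>X. P \<odot> X \<odot> P) ` {X. mat_on Conf X}"
    and "\<forall>Y \<in> (\<lambda>X. P \<odot> X \<odot> P) ` range B.lift1. X \<odot> Y = Y \<odot> X"
  shows "X \<in> (\<lambda>X. P \<odot> X \<odot> P) ` range B.lift2"
proof -
  obtain X0 where X0: "X = P \<odot> X0 \<odot> P"
    using assms(1) by auto
  have "mat_on Conf X"
    using X0 by simp
  moreover have "P \<odot> X = X"
    using X0 P_idem by (simp flip: mat_mul_assoc[OF finite_Conf])
  moreover have "X \<odot> P = X"
    using X0 P_idem by (simp add: mat_mul_assoc[OF finite_Conf])
  moreover have "X \<odot> (P \<odot> B.lift1 M \<odot> P) = P \<odot> B.lift1 M \<odot> P \<odot> X" for M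
    using assms(2) by auto
  ultimately obtain N where "X = P \<odot> B.lift2 N \<odot> P"
    using B.compressed_commutant_lift2[OF mat_on_P P_idem mat_adj_P lift2_ptrace_commute] by blast
  then show ?thesis by auto
qed

lemma compressed_lift2_commute_compressed_lift1:
  "P \<odot> B.lift2 N \<odot> P \<odot> (P \<odot> B.lift1 M \<odot> P) = P \<odot> B.lift1 M \<odot> P \<odot> (P \<odot> B.lift2 N \<odot> P)"
proof -
  obtain M' where "B.lift1 M' \<odot> P = P \<odot> B.lift1 M'" "P \<odot> B.lift1 M \<odot> P = P \<odot> B.lift1 M' \<odot> P"
    using commuting_lift1_representative[of M] by blast
  then show ?thesis
    by (rule B.compressed_lift2_commute[OF P_idem])
qed

lemma haag_duality:
  "{X \<in> (\<lambda>X. P \<odot> X \<odot> P) ` {X. mat_on Conf X}. \<forall>Y \<in> (\<lambda>X. P \<odot> X \<odot> P) ` range B.lift1. X \<odot> Y = Y \<odot> X}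
   = (\<lambda>X. P \<odot> X \<odot> P) ` range B.lift2"
  using compressed_commutant_subset compressed_lift2_commute_compressed_lift1 by auto

end

theorem corollary7:
  fixes Vs :: "'v list" and E :: "'e set" and src tgt :: "'e \<Rightarrow> 'v"
    and \<mu> :: "'g::{topological_group_add, t2_space, second_countable_topology} measure"
    and d :: "'v \<Rightarrow> nat" and U :: "'v \<Rightarrow> 'g \<Rightarrow> nat \<Rightarrow> nat \<Rightarrow> complex"
    and n :: "'e \<Rightarrow> nat" and \<phi> :: "'e \<Rightarrow> nat \<Rightarrow> 'g \<Rightarrow> complex"
    and r :: "('v + 'e) set"
  assumes "compact (UNIV :: 'g set)"
    and "haar_measure \<mu>"
    and "distinct Vs" and "finite E"
    and "\<forall>e\<in>E. src e \<in> set Vs \<and> tgt e \<in> set Vs"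
    and "\<forall>v\<in>set Vs. unitary_rep (d v) (U v)"
    and "\<forall>e\<in>E. L2_trunc_basis \<mu> (n e) (\<phi> e)"
    and "r \<subseteq> sites (set Vs) E"
  shows
    "(let S = sites (set Vs) E; D = site_dim d n;
          P = PiGI Vs E src tgt d n \<mu> U \<phi>;
          Ar = compress S D P (local_alg S D r);
          Arbar = compress S D P (local_alg S D (S - r));
          A = compress S D P (full_alg S D)
      in {X \<in> A. \<forall>Y \<in> Ar. opmul S D X Y = opmul S D Y X} = Arbar)"
proof -
  interpret G: gauge_region \<mu> Vs E src tgt d n U \<phi> r
    using assms by (intro gauge_region.intro gauge.intro haar.intro gauge_axioms.intro gauge_region_axioms.intro) auto
  show ?thesis
    unfolding Let_def G.PiGI_eq_vproj_prod opmul_eq_mat_mul G.local_alg_region G.local_alg_complement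
      G.full_alg_eq G.compress_eq
    by (rule G.haag_duality)
qed

end
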